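(* Let $G$ be a graph with $m$ edges and maximum degree $\Delta$, let $\epsilon\in(0,1)$ with $(1+\epsilon/2)\Delta$ an integer, and $\kappa,\ell\in\mathbb{N}$. Run Stage 1 (described in the context) on $(G,\kappa,\ell)$. For $1\le i\le m$ let $\phi_i$ be the coloring at the start of the $i$-th iteration, $C_i$ the color sample drawn in step (b) of the $i$-th iteration, and for a vertex $v$ let $d_i(v)$ be the indicator that an edge is flagged in iteration $i$ and $v$ is an endpoint of that edge (with $d_i(v)=0$ if iteration $i$ does not occur). Then $$\Pr\big[d_i(v)=1\ \big|\ \phi_i,\,C_i\big]\ \le\ \frac{\Delta\kappa^2}{\ell\,(m-i+1)}.$$ In particular, if $\ell\ge 50\kappa^2\ln n/\epsilon$, then $\Pr[d_i(v)=1\mid\phi_i,C_i]\le \dfrac{\epsilon\Delta}{50(m-i+1)\ln n}$.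
   Context: Let $G=(V,E)$ be a simple graph and $q\in\mathbb{N}$. A partial $q$-edge-coloring is a map $\phi:E\to[q]\cup\{\mathsf{blank}\}$ ($\mathsf{blank}$ = uncolored); it is proper if any two distinct colored edges sharing an endpoint get different colors. For $x\in V$, $M(\phi,x):=[q]\setminus\{\phi(xy): y\in N_G(x)\}$ is the set of colors missing at $x$. A fan under $\phi$ is a sequence $F=(x,y_0,\dots,y_{k-1})$ of distinct neighbors $y_i$ of $x$ with $\phi(xy_0)=\mathsf{blank}$ and $\phi(xy_i)\in M(\phi,y_{i-1})$ for $1\le i<k$; $\mathsf{length}(F)=k$. Shifting $F$ produces the coloring $\psi$ with $\psi(xy_i)=\phi(xy_{i+1})$ for $0\le i<k-1$, $\psi(xy_{k-1})=\mathsf{blank}$, and $\psi=\phi$ elsewhere. For $\alpha,\beta\in[q]$, an $\alpha\beta$-path under $\phi$ is a sequence $P=(x_0,\dots,x_s)$ of distinct vertices with $\phi(x_0x_1)=\alpha$ and the colors of $x_ix_{i+1}$ alternating $\alpha,\beta,\alpha,\dots$; $\mathsf{length}(P)=s$, $\mathsf{vEnd}(P)=x_s$. The path $(x_0)$ has length $0$. Flipping $P$ interchanges the colors $\alpha$ and $\beta$ on the edges of $P$. Procedure $\mathsf{MakeFan}(\phi,xy,x,C)$: set $F\gets(x,y)$, $z\gets y$, $k\gets 1$ (and write $y_0=y$). Repeat: if $C\cap M(\phi,z)=\varnothing$, return $\mathsf{FAIL}$. Let $\eta\gets\min (M(\phi,z)\cap C)$. Set $z\gets$ the neighbor $w$ of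 $x$ with $\phi(xw)=\eta$, or $z\gets\mathsf{blank}$ if no such $w$ exists. If $z=\mathsf{blank}$, return $(F,\eta,k)$. If $z=y_j$ for some vertex $y_j$ of $F$ other than $x$, return $(F,\eta,j)$. Otherwise set $y_k\gets z$, append $y_k$ to $F$, and $k\gets k+1$. Procedure $\mathsf{VizingChain}(\phi,xy,x,C,\ell)$: run $\mathsf{MakeFan}(\phi,xy,x,C)$; if it returns $\mathsf{FAIL}$, return $\mathsf{FAIL}$. Otherwise let $(F,\alpha,j)$ be its output. If $j=\mathsf{length}(F)$, return $((F,(x)),\alpha)$. If $M(\phi,x)\cap C=\varnothing$, return $\mathsf{FAIL}$. Otherwise let $\beta\gets\min(M(\phi,x)\cap C)$, let $P$ be the maximal $\alpha\beta$-path starting at $x$ if its length is at most $\ell$, and otherwise the initial segment of it consisting of its first $\ell$ edges; return $((F,P),\alpha)$. Stage 1 on $(G,\kappa,\ell)$, with $q'=(1+\epsilon/2)\Delta$ and all colorings taking values in $[q']\cup\{\mathsf{blank}\}$: set $U\gets E$ and $\phi\equiv\mathsf{blank}$. While $U\ne\varnothing$: (a) pick $e\in U$ uniformly at random and an endpoint $x$ of $e$ uniformly at random; (b) form $C$ by sampling $\kappa$ times with replacement, uniformly from $[q']$; (c) run $\mathsf{VizingChain}(\phi,e,x,C,\ell)$; if it returns $\mathsf{FAIL}$, return $\mathsf{FAIL}$; otherwise let $((F,P),\alpha)$ be its output with $F=(x,y_0,\dots,y_{k-1})$, $P=(x_0=x,\dots,x_s)$. (d) If $s=0$: shift $F$,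 color $xy_{k-1}$ with $\alpha$, remove $e$ from $U$, and go to the next iteration. (e) If $s=\ell$: choose $\ell'\in[\ell]$ uniformly at random, uncolor the edge $x_{\ell'-1}x_{\ell'}$ (this edge is said to be flagged in this iteration), and let $P'=(x_0,\dots,x_{\ell'-1})$; if $0<s<\ell$, let $P'=P$. (f) Let $j$ be such that $y_j=x_1$ and $F'=(x,y_0,\dots,y_{j-1})$. Flip the path $P'$. If $\mathsf{vEnd}(P')=y_{j-1}$, shift $F$ and color $xy_{k-1}$ with $\alpha$; otherwise shift $F'$ and color $xy_{j-1}$ with $\alpha$. (g) Remove $e$ from $U$. Each iteration removes exactly one edge from $U$, so at the start of iteration $i$ we have $|U|=m-i+1$, and there are at most $m$ iterations. *)

theory Defs
  imports "HOL-Probability.Probability_Mass_Function"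
begin

definition simple_graph :: "'a set \<Rightarrow> 'a set set \<Rightarrow> bool" where
  "simple_graph V E \<longleftrightarrow> finite V \<and> (\<forall>e\<in>E. e \<subseteq> V \<and> card e = 2)"

definition degree :: "'a set set \<Rightarrow> 'a \<Rightarrow> nat" where
  "degree E v = card {e\<in>E. v \<in> e}"

definition max_degree :: "'a set \<Rightarrow> 'a set set \<Rightarrow> nat" where
  "max_degree V E = Max (insert 0 (degree E ` V))"

(* partial edge colorings: None = blank *)
type_synonym 'a coloring = "'a set \<Rightarrow> nat option"

definition missing :: "'a set set \<Rightarrow> 'a coloring \<Rightarrow> nat \<Rightarrow> 'a \<Rightarrow> nat set" where
  "missing E \<phi> q z = {1..q} - {c. \<exists>y. {z,y} \<in> E \<and> \<phi> {z,y} = Some c}"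

(* MakeFan loop. F is the list y_0,...,y_{k-1}; returns (F, eta, j); None = FAIL.
   The fuel argument is never exhausted (see make_fan). *)
fun fan_loop :: "nat \<Rightarrow> 'a set set \<Rightarrow> 'a coloring \<Rightarrow> nat \<Rightarrow> 'a \<Rightarrow> nat set \<Rightarrow> 'a list
                  \<Rightarrow> ('a list \<times> nat \<times> nat) option" where
  "fan_loop 0 E \<phi> q x C F = None"
| "fan_loop (Suc n) E \<phi> q x C F =
     (let z = last F in
      if C \<inter> missing E \<phi> q z = {} then None
      else let \<eta> = Min (missing E \<phi> q z \<inter> C) in
        if \<exists>w. {x,w} \<in> E \<and> \<phi> {x,w} = Some \<eta> then
          (let w = (SOME w. {x,w} \<in> E \<and> \<phi> {x,w} = Some \<eta>) in
           if w \<in> set F then Some (F, \<eta>, LEAST j. F ! j = w)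
           else fan_loop n E \<phi> q x C (F @ [w]))
        else Some (F, \<eta>, length F))"

(* MakeFan(phi, e, x, C): y is the other endpoint of e.  Each non-terminating
   round appends a new neighbour of x, so card E + 1 rounds always suffice. *)
definition make_fan :: "'a set set \<Rightarrow> 'a coloring \<Rightarrow> nat \<Rightarrow> 'a set \<Rightarrow> 'a \<Rightarrow> nat set
                        \<Rightarrow> ('a list \<times> nat \<times> nat) option" where
  "make_fan E \<phi> q e x C = fan_loop (card E + 1) E \<phi> q x C [the_elem (e - {x})]"

fun alt_walk :: "nat \<Rightarrow> 'a set set \<Rightarrow> 'a coloring \<Rightarrow> 'a \<Rightarrow> nat \<Rightarrow> nat \<Rightarrow> 'a list \<Rightarrow> 'a list" where
  "alt_walk 0 E \<phi> u c d vs = vs"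
| "alt_walk (Suc n) E \<phi> u c d vs =
     (if \<exists>w. {u,w} \<in> E \<and> \<phi> {u,w} = Some c then
        (let w = (SOME w. {u,w} \<in> E \<and> \<phi> {u,w} = Some c) in
         if w \<in> set vs then vs else alt_walk n E \<phi> w d c (vs @ [w]))
      else vs)"

definition ab_path :: "'a set set \<Rightarrow> 'a coloring \<Rightarrow> 'a \<Rightarrow> nat \<Rightarrow> nat \<Rightarrow> nat \<Rightarrow> 'a list" where
  "ab_path E \<phi> x \<alpha> \<beta> l = alt_walk l E \<phi> x \<alpha> \<beta> [x]"

(* VizingChain: returns ((F, P), alpha) with F = [y_0..y_{k-1}] and P = [x_0..x_s]; None = FAIL *)
definition vizing_chain :: "'a set set \<Rightarrow> 'a coloring \<Rightarrow> nat \<Rightarrow> 'a set \<Rightarrow> 'a \<Rightarrow> nat set \<Rightarrow> nat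
                            \<Rightarrow> (('a list \<times> 'a list) \<times> nat) option" where
  "vizing_chain E \<phi> q e x C l =
     (case make_fan E \<phi> q e x C of
        None \<Rightarrow> None
      | Some (F, \<alpha>, j) \<Rightarrow>
          if j = length F then Some ((F, [x]), \<alpha>)
          else if missing E \<phi> q x \<inter> C = {} then None
          else Some ((F, ab_path E \<phi> x \<alpha> (Min (missing E \<phi> q x \<inter> C)) l), \<alpha>))"

fun shift_fan :: "'a coloring \<Rightarrow> 'a \<Rightarrow> 'a list \<Rightarrow> 'a coloring" where
  "shift_fan \<phi> x [] = \<phi>"
| "shift_fan \<phi> x [y] = \<phi>({x,y} := None)"
| "shift_fan \<phi> x (y # z # ys) = (shift_fan \<phi> x (z # ys))({x,y} := \<phi> {x,z})"

definition swap_col :: "nat \<Rightarrow> nat \<Rightarrow> nat option \<Rightarrow> nat option" where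
  "swap_col \<alpha> \<beta> c = (case c of None \<Rightarrow> None
      | Some a \<Rightarrow> Some (if a = \<alpha> then \<beta> else if a = \<beta> then \<alpha> else a))"

fun flip_path :: "'a coloring \<Rightarrow> nat \<Rightarrow> nat \<Rightarrow> 'a list \<Rightarrow> 'a coloring" where
  "flip_path \<phi> \<alpha> \<beta> (u # w # rest) =
     (flip_path \<phi> \<alpha> \<beta> (w # rest))({u,w} := swap_col \<alpha> \<beta> (\<phi> {u,w}))"
| "flip_path \<phi> \<alpha> \<beta> _ = \<phi>"

(* steps (d)-(f) of one iteration of Stage 1, given the output of VizingChain;
   returns the new coloring and the flagged edge (if any) *)
definition stage1_update :: "'a set set \<Rightarrow> 'a coloring \<Rightarrow> nat \<Rightarrow> nat \<Rightarrow> 'a \<Rightarrow> nat set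
        \<Rightarrow> 'a list \<Rightarrow> 'a list \<Rightarrow> nat \<Rightarrow> ('a coloring \<times> 'a set option) pmf" where
  "stage1_update E \<phi> q l x C F P \<alpha> =
     (let s = length P - 1 in
      if s = 0 then return_pmf ((shift_fan \<phi> x F)({x, last F} := Some \<alpha>), None)
      else
        let \<beta> = Min (missing E \<phi> q x \<inter> C);
            j = (LEAST j. F ! j = P ! 1)
        in map_pmf
             (\<lambda>(\<phi>1, P', fl).
                let \<phi>2 = flip_path \<phi>1 \<alpha> \<beta> P' in
                if last P' = F ! (j - 1)
                then ((shift_fan \<phi>2 x F)({x, last F} := Some \<alpha>), fl)
                else ((shift_fan \<phi>2 x (take j F))({x, F ! (j - 1)} := Some \<alpha>), fl))
             (if s = l then
                map_pmf (\<lambda>l'. (\<phi>({P ! (l' - 1), P ! l'} := None), take l' P,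
                                Some {P ! (l' - 1), P ! l'}))
                        (pmf_of_set {1..l})
              else return_pmf (\<phi>, P, None)))"

fun sample_list :: "nat \<Rightarrow> nat set \<Rightarrow> nat list pmf" where
  "sample_list 0 S = return_pmf []"
| "sample_list (Suc k) S = bind_pmf (pmf_of_set S) (\<lambda>c. map_pmf (Cons c) (sample_list k S))"

(* record of one iteration: (coloring at its start, colour sample C, flagged edge) *)
type_synonym 'a iter_record = "'a coloring \<times> nat set \<times> 'a set option"

(* Stage 1 loop; the output is the list of iterations that occurred.  After a FAIL
   (recorded with no flagged edge) no further iteration occurs. *)
fun stage1_loop :: "nat \<Rightarrow> 'a set set \<Rightarrow> nat \<Rightarrow> nat \<Rightarrow> nat \<Rightarrow> 'a set set \<Rightarrow> 'a coloring
                    \<Rightarrow> 'a iter_record list pmf" where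
  "stage1_loop 0 E q \<kappa> l U \<phi> = return_pmf []"
| "stage1_loop (Suc n) E q \<kappa> l U \<phi> =
     (if U = {} then return_pmf [] else
      bind_pmf (pmf_of_set U) (\<lambda>e.
      bind_pmf (pmf_of_set e) (\<lambda>x.
      bind_pmf (map_pmf set (sample_list \<kappa> {1..q})) (\<lambda>C.
        case vizing_chain E \<phi> q e x C l of
          None \<Rightarrow> return_pmf [(\<phi>, C, None)]
        | Some ((F, P), \<alpha>) \<Rightarrow>
            bind_pmf (stage1_update E \<phi> q l x C F P \<alpha>) (\<lambda>(\<phi>', fl).
            map_pmf (Cons (\<phi>, C, fl)) (stage1_loop n E q \<kappa> l (U - {e}) \<phi>'))))))"

definition stage1 :: "'a set set \<Rightarrow> nat \<Rightarrow> nat \<Rightarrow> nat \<Rightarrow> 'a iter_record list pmf" where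
  "stage1 E q \<kappa> l = stage1_loop (card E) E q \<kappa> l E (\<lambda>_. None)"

(* phi_i, C_i (None if iteration i does not occur) and d_i(v) *)
definition phi_at :: "'a iter_record list \<Rightarrow> nat \<Rightarrow> 'a coloring option" where
  "phi_at t i = (if 1 \<le> i \<and> i \<le> length t then Some (fst (t ! (i - 1))) else None)"

definition C_at :: "'a iter_record list \<Rightarrow> nat \<Rightarrow> nat set option" where
  "C_at t i = (if 1 \<le> i \<and> i \<le> length t then Some (fst (snd (t ! (i - 1)))) else None)"

definition flagged_at :: "'a iter_record list \<Rightarrow> nat \<Rightarrow> 'a \<Rightarrow> bool" where
  "flagged_at t i v \<longleftrightarrow> 1 \<le> i \<and> i \<le> length t \<and>
      (\<exists>f. snd (snd (t ! (i - 1))) = Some f \<and> v \<in> f)"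

end

theory Submission
  imports Defs
begin

text \<open>
  Once \<open>\<phi>\<^sub>i\<close> and \<open>C\<^sub>i\<close> are fixed, iteration \<open>i\<close> still picks the edge \<open>e\<close> uniformly among the
  \<open>m - i + 1\<close> uncoloured edges, then its endpoint \<open>x\<close>, and, if the Vizing chain of \<open>(e, x)\<close>
  has \<open>l\<close> edges, the flagged position \<open>l' \<in> {1..l}\<close>. So \<open>v\<close> is flagged with probability at
  most the number of triples \<open>(e, x, l')\<close> whose flagged edge contains \<open>v\<close>, divided by
  \<open>2 l (m - i + 1)\<close>. Shifting fans and flipping alternating paths keep every colouring of Stage 1
  proper, so the flagged edge carries one of the two chain colours, and an alternating path that
  starts where its second colour is missing can be traced back uniquely from any of its edges.
  Thus a triple is determined by its colour pair and flagged edge at \<open>v\<close> (at most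
  \<open>2 |C\<^sub>i|\<^sup>2\<close> choices) together with the edge \<open>e\<close> at \<open>x\<close> (at most \<open>\<Delta>\<close> choices).
\<close>

section \<open>Discrete distributions\<close>

lemma measure_cond_pmf:
  assumes "set_pmf p \<inter> A \<noteq> {}"
  shows "measure_pmf.prob (cond_pmf p A) B = measure_pmf.prob p (A \<inter> B) / measure_pmf.prob p A"
proof -
  have "measure_pmf (cond_pmf p A) = uniform_measure (measure_pmf p) A"
    using cond_pmf.rep_eq[OF assms] .
  moreover have "emeasure (measure_pmf p) A \<noteq> 0"
    using assms by (simp add: measure_pmf.emeasure_eq_measure measure_pmf_zero_iff)
  ultimately show ?thesis
    by (simp add: measure_pmf.emeasure_eq_measure)
qed

lemma measure_bind_pmf_le_mult:
  assumes "\<And>y. y \<in> set_pmf p \<Longrightarrow> measure_pmf.prob (f y) S \<le> K * measure_pmf.prob (f y) T"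
    and "K \<ge> 0"
  shows "measure_pmf.prob (bind_pmf p f) S \<le> K * measure_pmf.prob (bind_pmf p f) T"
proof -
  have "ennreal (measure_pmf.prob (bind_pmf p f) S) = emeasure (bind_pmf p f) S"
    by (simp add: measure_pmf.emeasure_eq_measure)
  also have "\<dots> = (\<integral>\<^sup>+y. emeasure (f y) S \<partial>p)" by simp
  also have "\<dots> \<le> (\<integral>\<^sup>+y. ennreal K * emeasure (f y) T \<partial>p)"
    using assms by (intro nn_integral_mono_AE)
      (auto simp: AE_measure_pmf_iff measure_pmf.emeasure_eq_measure ennreal_mult[symmetric])
  also have "\<dots> = ennreal K * (\<integral>\<^sup>+y. emeasure (f y) T \<partial>p)"
    by (simp add: nn_integral_cmult)
  also have "\<dots> = ennreal K * emeasure (bind_pmf p f) T" by simp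
  also have "\<dots> = ennreal (K * measure_pmf.prob (bind_pmf p f) T)"
    using assms(2) by (simp add: measure_pmf.emeasure_eq_measure ennreal_mult)
  finally show ?thesis using assms(2) by (simp add: ennreal_le_iff)
qed

lemma measure_bind_pmf_le_measure:
  assumes "\<And>y. y \<in> set_pmf p \<Longrightarrow> y \<notin> A \<Longrightarrow> measure_pmf.prob (f y) S = 0"
  shows "measure_pmf.prob (bind_pmf p f) S \<le> measure_pmf.prob p A"
proof -
  have "ennreal (measure_pmf.prob (bind_pmf p f) S) = emeasure (bind_pmf p f) S"
    by (simp add: measure_pmf.emeasure_eq_measure)
  also have "\<dots> = (\<integral>\<^sup>+y. emeasure (f y) S \<partial>p)" by simp
  also have "\<dots> \<le> (\<integral>\<^sup>+y. indicator A y \<partial>p)"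
  proof (rule nn_integral_mono_AE)
    show "AE y in measure_pmf p. emeasure (measure_pmf (f y)) S \<le> indicator A y"
      unfolding AE_measure_pmf_iff
    proof
      fix y assume y: "y \<in> set_pmf p"
      show "emeasure (measure_pmf (f y)) S \<le> indicator A y"
      proof (cases "y \<in> A")
        case True then show ?thesis by (simp add: measure_pmf.emeasure_eq_measure)
      next
        case False then show ?thesis using assms[OF y] by (simp add: measure_pmf.emeasure_eq_measure)
      qed
    qed
  qed
  also have "\<dots> = emeasure p A" by simp
  also have "\<dots> = ennreal (measure_pmf.prob p A)" by (simp add: measure_pmf.emeasure_eq_measure)
  finally show ?thesis by (simp add: ennreal_le_iff)
qed

lemma measure_bind_pmf_of_set:
  assumes "finite U" "U \<noteq> {}"
  shows "measure_pmf.prob (bind_pmf (pmf_of_set U) f) S = (\<Sum>e\<in>U. measure_pmf.prob (f e) S) / card U"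
proof -
  have "ennreal (measure_pmf.prob (bind_pmf (pmf_of_set U) f) S) = emeasure (bind_pmf (pmf_of_set U) f) S"
    by (simp add: measure_pmf.emeasure_eq_measure)
  also have "\<dots> = (\<integral>\<^sup>+e. emeasure (f e) S \<partial>pmf_of_set U)" by simp
  also have "\<dots> = (\<Sum>e\<in>U. emeasure (f e) S) / card U" by (rule nn_integral_pmf_of_set[OF assms(2,1)])
  also have "\<dots> = ennreal (\<Sum>e\<in>U. measure_pmf.prob (f e) S) / ennreal (card U)"
    by (simp add: measure_pmf.emeasure_eq_measure sum_ennreal ennreal_of_nat_eq_real_of_nat)
  also have "\<dots> = ennreal ((\<Sum>e\<in>U. measure_pmf.prob (f e) S) / card U)"
    using assms by (subst divide_ennreal) (auto simp: sum_nonneg card_gt_0_iff)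
  finally show ?thesis by (subst (asm) ennreal_inj) (auto intro!: divide_nonneg_nonneg sum_nonneg)
qed

lemma sample_list_len: "xs \<in> set_pmf (sample_list k S) \<Longrightarrow> length xs = k"
  by (induction k arbitrary: xs) auto

lemma sample_set_card: "C \<in> set_pmf (map_pmf set (sample_list k S)) \<Longrightarrow> finite C \<and> card C \<le> k"
  using sample_list_len card_length by fastforce

section \<open>Proper colourings and alternating paths\<close>

definition proper_coloring :: "'a coloring \<Rightarrow> bool" where
  "proper_coloring \<phi> \<longleftrightarrow> (\<forall>u w1 w2 c. \<phi> {u,w1} = Some c \<longrightarrow> \<phi> {u,w2} = Some c \<longrightarrow> w1 = w2)"

definition coloring_on :: "'a set set \<Rightarrow> 'a coloring \<Rightarrow> bool" where
  "coloring_on E \<phi> \<longleftrightarrow> (\<forall>f. \<phi> f \<noteq> None \<longrightarrow> f \<in> E)"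

definition free_at :: "'a coloring \<Rightarrow> 'a \<Rightarrow> nat \<Rightarrow> bool" where
  "free_at \<phi> z c \<longleftrightarrow> (\<forall>y. \<phi> {z,y} \<noteq> Some c)"

definition alt_color :: "nat \<Rightarrow> nat \<Rightarrow> nat \<Rightarrow> nat" where
  "alt_color \<alpha> \<beta> t = (if even t then \<alpha> else \<beta>)"

definition alternating :: "'a coloring \<Rightarrow> nat \<Rightarrow> nat \<Rightarrow> 'a list \<Rightarrow> bool" where
  "alternating \<phi> \<alpha> \<beta> P \<longleftrightarrow> (\<forall>t. Suc t < length P \<longrightarrow> \<phi> {P!t, P!Suc t} = Some (alt_color \<alpha> \<beta> t))"

lemma proper_coloringD: "proper_coloring \<phi> \<Longrightarrow> \<phi> {u,w1} = Some c \<Longrightarrow> \<phi> {u,w2} = Some c \<Longrightarrow> w1 = w2"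
  unfolding proper_coloring_def by blast

lemma proper_coloringD': "proper_coloring \<phi> \<Longrightarrow> \<phi> {w1,u} = Some c \<Longrightarrow> \<phi> {u,w2} = Some c \<Longrightarrow> w1 = w2"
  unfolding proper_coloring_def by (metis insert_commute)

lemma free_atD: "free_at \<phi> z c \<Longrightarrow> \<phi> {z,y} = Some c \<Longrightarrow> False"
  unfolding free_at_def by blast

lemma free_atD': "free_at \<phi> z c \<Longrightarrow> \<phi> {y,z} = Some c \<Longrightarrow> False"
  unfolding free_at_def by (metis insert_commute)

lemma missing_free_at: "coloring_on E \<phi> \<Longrightarrow> c \<in> missing E \<phi> q z \<Longrightarrow> free_at \<phi> z c"
  unfolding coloring_on_def missing_def free_at_def by fastforce

lemma alt_color_Suc_Suc[simp]: "alt_color \<alpha> \<beta> (Suc (Suc t)) = alt_color \<alpha> \<beta> t"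
  by (simp add: alt_color_def)

lemma alt_color_Suc_neq: "\<alpha> \<noteq> \<beta> \<Longrightarrow> alt_color \<alpha> \<beta> (Suc t) \<noteq> alt_color \<alpha> \<beta> t"
  by (simp add: alt_color_def)

lemma alt_color_cases: "alt_color \<alpha> \<beta> t = \<alpha> \<or> alt_color \<alpha> \<beta> t = \<beta>"
  by (simp add: alt_color_def)

lemma alt_color_other: "c = \<alpha> \<or> c = \<beta> \<Longrightarrow> c \<noteq> alt_color \<alpha> \<beta> t \<Longrightarrow> c = alt_color \<alpha> \<beta> (Suc t)"
  by (auto simp: alt_color_def)

lemma doubleton_eq_right: "{u,w1} = {u,w2} \<Longrightarrow> w1 = w2"
  by (metis doubleton_eq_iff)

lemma alternating_snoc:
  assumes "alternating \<phi> \<alpha> \<beta> vs" "vs \<noteq> []" "\<phi> {last vs, w} = Some (alt_color \<alpha> \<beta> (length vs - 1))"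
  shows "alternating \<phi> \<alpha> \<beta> (vs @ [w])"
  unfolding alternating_def
proof (intro allI impI)
  fix t assume t: "Suc t < length (vs @ [w])"
  show "\<phi> {(vs @ [w]) ! t, (vs @ [w]) ! Suc t} = Some (alt_color \<alpha> \<beta> t)"
  proof (cases "Suc t < length vs")
    case True then show ?thesis using assms(1) by (simp add: alternating_def nth_append)
  next
    case False
    then have "t = length vs - 1" using t by simp
    then show ?thesis using assms(2,3) False
      by (simp add: nth_append last_conv_nth)
  qed
qed

definition alt_walk_blocked :: "'a set set \<Rightarrow> 'a coloring \<Rightarrow> nat \<Rightarrow> nat \<Rightarrow> 'a list \<Rightarrow> bool" where
  "alt_walk_blocked E \<phi> \<alpha> \<beta> R \<longleftrightarrow>
     (\<forall>w. {last R, w} \<in> E \<longrightarrow> \<phi> {last R, w} \<noteq> Some (alt_color \<alpha> \<beta> (length R - 1))) \<or>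
     (\<exists>w\<in>set R. \<phi> {last R, w} = Some (alt_color \<alpha> \<beta> (length R - 1)))"

lemma alt_walk_props:
  assumes "vs \<noteq> []" "distinct vs" "last vs = u" "alternating \<phi> \<alpha> \<beta> vs"
    "c = alt_color \<alpha> \<beta> (length vs - 1)" "d = alt_color \<alpha> \<beta> (length vs)"
  shows "let R = alt_walk n E \<phi> u c d vs in
    (\<exists>ys. R = vs @ ys) \<and> distinct R \<and> alternating \<phi> \<alpha> \<beta> R \<and> length R \<le> length vs + n \<and>
    (length R < length vs + n \<longrightarrow> alt_walk_blocked E \<phi> \<alpha> \<beta> R)"
  using assms
proof (induction n arbitrary: u c d vs)
  case 0
  then show ?case by simp
next
  case (Suc n)
  show ?case
  proof (cases "\<exists>w. {u,w} \<in> E \<and> \<phi> {u,w} = Some c")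
    case False
    then show ?thesis using Suc.prems by (auto simp: alt_walk_blocked_def)
  next
    case True
    define w where "w = (SOME w. {u,w} \<in> E \<and> \<phi> {u,w} = Some c)"
    have w: "{u,w} \<in> E \<and> \<phi> {u,w} = Some c" unfolding w_def using True by (rule someI_ex)
    show ?thesis
    proof (cases "w \<in> set vs")
      case True
      have eq: "alt_walk (Suc n) E \<phi> u c d vs = vs"
        using \<open>\<exists>w. _\<close> True by (simp add: w_def[symmetric] Let_def)
      show ?thesis unfolding eq Let_def using Suc.prems w True by (auto simp: alt_walk_blocked_def)
    next
      case False
      have eq: "alt_walk (Suc n) E \<phi> u c d vs = alt_walk n E \<phi> w d c (vs @ [w])"
        using \<open>\<exists>w. _\<close> False by (simp add: w_def[symmetric] Let_def)
      have "alternating \<phi> \<alpha> \<beta> (vs @ [w])"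
        using alternating_snoc[OF Suc.prems(4) Suc.prems(1)] w Suc.prems(3,5) by simp
      moreover have "c = alt_color \<alpha> \<beta> (length (vs @ [w]))"
        using Suc.prems(1,5) by (cases vs) (auto simp: alt_color_def)
      ultimately have IH: "let R = alt_walk n E \<phi> w d c (vs @ [w]) in
          (\<exists>ys. R = (vs @ [w]) @ ys) \<and> distinct R \<and> alternating \<phi> \<alpha> \<beta> R \<and>
          length R \<le> length (vs @ [w]) + n \<and>
          (length R < length (vs @ [w]) + n \<longrightarrow> alt_walk_blocked E \<phi> \<alpha> \<beta> R)"
        using Suc.prems False by (intro Suc.IH) auto
      then show ?thesis unfolding eq Let_def by auto
    qed
  qed
qed

lemma ab_path_props:
  assumes "P = ab_path E \<phi> x \<alpha> \<beta> l"
  shows "P \<noteq> [] \<and> P ! 0 = x \<and> distinct P \<and> alternating \<phi> \<alpha> \<beta> P \<and> length P \<le> Suc l \<and>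
    (length P < Suc l \<longrightarrow> alt_walk_blocked E \<phi> \<alpha> \<beta> P)"
proof -
  have "let R = alt_walk l E \<phi> x \<alpha> \<beta> [x] in
    (\<exists>ys. R = [x] @ ys) \<and> distinct R \<and> alternating \<phi> \<alpha> \<beta> R \<and> length R \<le> length [x] + l \<and>
    (length R < length [x] + l \<longrightarrow> alt_walk_blocked E \<phi> \<alpha> \<beta> R)"
    by (rule alt_walk_props) (auto simp: alternating_def alt_color_def)
  then show ?thesis unfolding assms ab_path_def Let_def by auto
qed

lemma alternating_no_return:
  assumes pr: "proper_coloring \<phi>" and ab: "\<alpha> \<noteq> \<beta>" and fx: "free_at \<phi> (P!0) \<beta>"
    and d: "distinct P" and a: "alternating \<phi> \<alpha> \<beta> P" and ne: "P \<noteq> []"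
    and w: "w \<in> set P" and e: "\<phi> {last P, w} = Some (alt_color \<alpha> \<beta> (length P - 1))"
    and sing: "\<And>z. \<phi> {z} = None"
  shows False
proof -
  define s where "s = length P - 1"
  have ls: "last P = P ! s" using ne by (simp add: s_def last_conv_nth)
  have sl: "s < length P" using ne by (simp add: s_def)
  obtain r where r: "r < length P" "w = P ! r" using w by (auto simp: in_set_conv_nth)
  have e': "\<phi> {P!s, P!r} = Some (alt_color \<alpha> \<beta> s)" using e ls r s_def by simp
  have ae: "\<And>t. Suc t < length P \<Longrightarrow> \<phi> {P!t, P!Suc t} = Some (alt_color \<alpha> \<beta> t)"
    using a by (simp add: alternating_def)
  show False
  proof (cases "r = s")
    case True then show False using e' sing by simp
  next
    case False
    then have rs: "r < s" using r sl s_def by simp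
    show False
    proof (cases r)
      case 0
      show False
      proof (cases "alt_color \<alpha> \<beta> s = \<beta>")
        case True
        then show False using fx e' 0 by (metis free_atD')
      next
        case False
        then have "alt_color \<alpha> \<beta> s = \<alpha>" using alt_color_cases by metis
        moreover have "\<phi> {P!0, P!1} = Some \<alpha>" using ae[of 0] rs sl by (simp add: alt_color_def)
        ultimately have "P!s = P!1" using e' 0 pr by (metis proper_coloringD')
        then have "s = 1" using d sl rs by (simp add: nth_eq_iff_index_eq)
        then show False using False by (simp add: alt_color_def)
      qed
    next
      case (Suc r')
      have e1: "\<phi> {P!r', P!r} = Some (alt_color \<alpha> \<beta> r')" using ae[of r'] Suc rs sl by simp
      have e2: "\<phi> {P!r, P!Suc r} = Some (alt_color \<alpha> \<beta> r)" using ae[of r] rs sl by simp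
      have "alt_color \<alpha> \<beta> r \<noteq> alt_color \<alpha> \<beta> r'" using Suc alt_color_Suc_neq[OF ab] by simp
      then consider "alt_color \<alpha> \<beta> s = alt_color \<alpha> \<beta> r" | "alt_color \<alpha> \<beta> s = alt_color \<alpha> \<beta> r'" using alt_color_cases by metis
      then show False
      proof cases
        case 1
        then have "P!s = P!Suc r" using e' e2 pr by (metis proper_coloringD' insert_commute)
        then have "s = Suc r" using d sl rs by (simp add: nth_eq_iff_index_eq)
        then show False using 1 alt_color_Suc_neq[OF ab] by metis
      next
        case 2
        then have "P!s = P!r'" using e' e1 pr by (metis proper_coloringD insert_commute)
        then have "s = r'" using d sl rs Suc by (simp add: nth_eq_iff_index_eq)
        then show False using rs Suc by simp
      qed
    qed
  qed
qed

lemma ab_path_end_free: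
  assumes sg: "\<forall>f\<in>E. card f = 2" and pr: "proper_coloring \<phi>" and sp: "coloring_on E \<phi>"
    and ab: "\<alpha> \<noteq> \<beta>" and fx: "free_at \<phi> x \<beta>"
    and P: "P = ab_path E \<phi> x \<alpha> \<beta> l" and short: "length P < Suc l"
  shows "free_at \<phi> (last P) (alt_color \<alpha> \<beta> (length P - 1))"
proof -
  note AP = ab_path_props[OF P]
  have sing: "\<phi> {z} = None" for z
  proof (rule ccontr)
    assume "\<phi> {z} \<noteq> None"
    then have "card {z} = 2" using sp sg by (auto simp: coloring_on_def)
    then show False by simp
  qed
  have "\<not> (\<exists>w\<in>set P. \<phi> {last P, w} = Some (alt_color \<alpha> \<beta> (length P - 1)))"
    using alternating_no_return[OF pr ab _ _ _ _ _ _ sing] AP fx by metis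
  then have "\<forall>w. {last P, w} \<in> E \<longrightarrow> \<phi> {last P, w} \<noteq> Some (alt_color \<alpha> \<beta> (length P - 1))"
    using AP short by (auto simp: alt_walk_blocked_def)
  then show ?thesis using sp by (auto simp: free_at_def coloring_on_def)
qed

lemma alternating_interior_not_free:
  assumes a: "alternating \<phi> \<alpha> \<beta> P" and t: "1 \<le> t" "Suc t < length P" and fz: "free_at \<phi> (P!t) \<alpha>"
  shows False
proof -
  obtain t' where t': "t = Suc t'" using t by (cases t) auto
  have e1: "\<phi> {P!t', P!t} = Some (alt_color \<alpha> \<beta> t')" using a t t' by (simp add: alternating_def)
  have e2: "\<phi> {P!t, P!Suc t} = Some (alt_color \<alpha> \<beta> t)" using a t by (simp add: alternating_def)
  have "alt_color \<alpha> \<beta> t' = \<alpha> \<or> alt_color \<alpha> \<beta> t = \<alpha>" using t' by (simp add: alt_color_def)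
  then show False using e1 e2 fz free_atD free_atD' by metis
qed

lemma alternating_free_mem_last:
  assumes a: "alternating \<phi> \<alpha> \<beta> P" and z: "z \<in> set P" "z \<noteq> P!0" and fz: "free_at \<phi> z \<alpha>"
  shows "z = last P"
proof -
  obtain t where t: "t < length P" "P!t = z" using z(1) by (auto simp: in_set_conv_nth)
  have "1 \<le> t" using t z(2) by (cases t) auto
  then have "\<not> Suc t < length P" using alternating_interior_not_free[OF a] t fz by blast
  then have "t = length P - 1" using t by linarith
  moreover have "P \<noteq> []" using z(1) by auto
  ultimately show ?thesis using t by (simp add: last_conv_nth)
qed

lemma alternating_back_zero:
  assumes pr: "proper_coloring \<phi>" and a: "alternating \<phi> \<alpha> \<beta> P" and a': "alternating \<phi> \<alpha>' \<beta>' P'"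
    and ab': "\<alpha>' \<noteq> \<beta>'" and S: "{\<alpha>,\<beta>} = {\<alpha>',\<beta>'}"
    and fx: "free_at \<phi> (P!0) \<beta>"
    and l1: "Suc 0 < length P" and l2: "Suc (Suc k) < length P'"
    and e1: "P!0 = P'!Suc k" and e2: "P!1 = P'!Suc (Suc k)"
  shows False
proof -
  have c1: "\<phi> {P!0, P!Suc 0} = Some \<alpha>" using a l1 by (simp add: alternating_def alt_color_def)
  have c2: "\<phi> {P'!Suc k, P'!Suc (Suc k)} = Some (alt_color \<alpha>' \<beta>' (Suc k))" using a' l2 by (simp add: alternating_def)
  have "alt_color \<alpha>' \<beta>' (Suc k) = \<alpha>" using c1 c2 e1 e2 by simp
  moreover have c3: "\<phi> {P'!k, P'!Suc k} = Some (alt_color \<alpha>' \<beta>' k)" using a' l2 by (simp add: alternating_def)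
  moreover have "alt_color \<alpha>' \<beta>' k \<noteq> alt_color \<alpha>' \<beta>' (Suc k)" using alt_color_Suc_neq[OF ab'] by metis
  ultimately have "alt_color \<alpha>' \<beta>' k = \<beta>" using S alt_color_cases[of \<alpha>' \<beta>' k] by (auto simp: doubleton_eq_iff)
  then have "\<phi> {P'!k, P!0} = Some \<beta>" using c3 e1 by simp
  then show False using free_atD'[OF fx] by blast
qed

lemma alternating_start_unique:
  assumes pr: "proper_coloring \<phi>" and a: "alternating \<phi> \<alpha> \<beta> P" and a': "alternating \<phi> \<alpha>' \<beta>' P'"
    and ab: "\<alpha> \<noteq> \<beta>" and S: "{\<alpha>,\<beta>} = {\<alpha>',\<beta>'}"
    and fx: "free_at \<phi> (P!0) \<beta>" and fx': "free_at \<phi> (P'!0) \<beta>'"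
  shows "Suc i < length P \<Longrightarrow> Suc i' < length P' \<Longrightarrow> P!i = P'!i' \<Longrightarrow> P!Suc i = P'!Suc i'
    \<Longrightarrow> i = i' \<and> P!0 = P'!0"
proof (induction i arbitrary: i')
  have ab': "\<alpha>' \<noteq> \<beta>'" using ab S by (auto simp: doubleton_eq_iff)
  case 0
  show ?case
  proof (cases i')
    case 0 then show ?thesis using "0.prems" by simp
  next
    case (Suc k)
    have False by (rule alternating_back_zero[OF pr a a' ab' S fx, of k]) (use "0.prems" Suc in auto)
    then show ?thesis ..
  qed
next
  case (Suc i)
  have ab': "\<alpha>' \<noteq> \<beta>'" using ab S by (auto simp: doubleton_eq_iff)
  show ?case
  proof (cases i')
    case 0
    have False by (rule alternating_back_zero[OF pr a' a ab S[symmetric] fx', of i]) (use Suc.prems 0 in auto)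
    then show ?thesis ..
  next
    case (Suc k)
    have c: "\<phi> {P!Suc i, P!Suc (Suc i)} = Some (alt_color \<alpha> \<beta> (Suc i))" using a Suc.prems(1) by (simp add: alternating_def)
    have c': "\<phi> {P'!Suc k, P'!Suc (Suc k)} = Some (alt_color \<alpha>' \<beta>' (Suc k))" using a' Suc.prems(2) Suc by (simp add: alternating_def)
    have same: "alt_color \<alpha> \<beta> (Suc i) = alt_color \<alpha>' \<beta>' (Suc k)" using c c' Suc.prems Suc by simp
    have d: "\<phi> {P!i, P!Suc i} = Some (alt_color \<alpha> \<beta> i)" using a Suc.prems(1) by (simp add: alternating_def)
    have d': "\<phi> {P'!k, P'!Suc k} = Some (alt_color \<alpha>' \<beta>' k)" using a' Suc.prems(2) Suc by (simp add: alternating_def)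
    have n1: "alt_color \<alpha> \<beta> i \<noteq> alt_color \<alpha> \<beta> (Suc i)" using alt_color_Suc_neq[OF ab] by metis
    have n2: "alt_color \<alpha>' \<beta>' k \<noteq> alt_color \<alpha>' \<beta>' (Suc k)" using alt_color_Suc_neq[OF ab'] by metis
    have "alt_color \<alpha> \<beta> i = alt_color \<alpha>' \<beta>' k"
      using n1 n2 same S alt_color_cases[of \<alpha> \<beta> i] alt_color_cases[of \<alpha>' \<beta>' k] alt_color_cases[of \<alpha> \<beta> "Suc i"]
      by (auto simp: doubleton_eq_iff)
    then have "\<phi> {P!Suc i, P'!k} = Some (alt_color \<alpha> \<beta> i)" using d' Suc.prems Suc by (simp add: insert_commute)
    then have "P!i = P'!k" by (rule proper_coloringD'[OF pr d])
    then have "i = k \<and> P!0 = P'!0" using Suc.IH[of k] Suc.prems Suc by simp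
    then show ?thesis using Suc by simp
  qed
qed

section \<open>Fans and shifting\<close>

definition is_fan :: "'a set set \<Rightarrow> 'a coloring \<Rightarrow> nat \<Rightarrow> 'a \<Rightarrow> 'a list \<Rightarrow> bool" where
  "is_fan E \<phi> q x F \<longleftrightarrow> F \<noteq> [] \<and> distinct F \<and> x \<notin> set F \<and> (\<forall>y\<in>set F. {x,y} \<in> E) \<and>
     (\<forall>i. 0 < i \<and> i < length F \<longrightarrow> (\<exists>c. \<phi> {x, F!i} = Some c \<and> c \<in> missing E \<phi> q (F!(i-1))))"

lemma is_fanE:
  assumes "is_fan E \<phi> q x F" "coloring_on E \<phi>" "0 < i" "i < length F"
  obtains c where "\<phi> {x, F!i} = Some c" "free_at \<phi> (F!(i-1)) c"
proof -
  have "\<exists>c. \<phi> {x, F!i} = Some c \<and> c \<in> missing E \<phi> q (F!(i-1))"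
    using assms(1,3,4) unfolding is_fan_def by blast
  then obtain c where "\<phi> {x, F!i} = Some c" "c \<in> missing E \<phi> q (F!(i-1))" by blast
  then show ?thesis using that missing_free_at[OF assms(2)] by blast
qed

lemma is_fan_snoc:
  assumes F: "is_fan E \<phi> q x F" and w: "w \<notin> set F" "w \<noteq> x" "{x,w} \<in> E"
    and c: "\<phi> {x,w} = Some c" "c \<in> missing E \<phi> q (last F)"
  shows "is_fan E \<phi> q x (F @ [w])"
  unfolding is_fan_def
proof (intro conjI allI impI)
  show "\<exists>c. \<phi> {x, (F @ [w]) ! i} = Some c \<and> c \<in> missing E \<phi> q ((F @ [w]) ! (i - 1))"
    if i: "0 < i \<and> i < length (F @ [w])" for i
  proof (cases "i < length F")
    case True
    then show ?thesis using F i by (auto simp: is_fan_def nth_append)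
  next
    case False
    then have "i = length F" using i by simp
    moreover have "F \<noteq> []" using F by (simp add: is_fan_def)
    ultimately show ?thesis using c by (auto simp: nth_append last_conv_nth)
  qed
qed (use F w in \<open>auto simp: is_fan_def\<close>)

lemma fan_loop_props:
  assumes "fan_loop n E \<phi> q x C F = Some (F', \<eta>, j)" "is_fan E \<phi> q x F"
    and sg: "\<forall>f\<in>E. card f = 2"
  shows "is_fan E \<phi> q x F' \<and> F' ! 0 = F ! 0 \<and> \<eta> \<in> missing E \<phi> q (last F') \<and> \<eta> \<in> C \<and>
    ((j = length F' \<and> \<not>(\<exists>w. {x,w} \<in> E \<and> \<phi> {x,w} = Some \<eta>)) \<or>
     (j < length F' \<and> \<phi> {x, F'!j} = Some \<eta>))"
  using assms(1,2)
proof (induction n arbitrary: F)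
  case 0
  then show ?case by simp
next
  case (Suc n)
  define z where "z = last F"
  have ne: "C \<inter> missing E \<phi> q z \<noteq> {}"
    using Suc.prems(1) by (auto simp: z_def Let_def split: if_splits)
  define \<eta>0 where "\<eta>0 = Min (missing E \<phi> q z \<inter> C)"
  have fin: "finite (missing E \<phi> q z \<inter> C)" by (simp add: missing_def)
  have \<eta>0: "\<eta>0 \<in> missing E \<phi> q z \<inter> C" unfolding \<eta>0_def
    using fin ne by (metis Int_commute Min_in)
  show ?case
  proof (cases "\<exists>w. {x,w} \<in> E \<and> \<phi> {x,w} = Some \<eta>0")
    case False
    then have h: "(\<exists>w. {x,w} \<in> E \<and> \<phi> {x,w} = Some \<eta>0) = False" by simp
    have "Some (F, \<eta>0, length F) = Some (F', \<eta>, j)"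
      using Suc.prems(1) ne by (simp add: z_def[symmetric] \<eta>0_def[symmetric] Let_def h del: not_ex) blast
    then show ?thesis using False \<eta>0 Suc.prems(2) by (auto simp: z_def)
  next
    case True
    define w where "w = (SOME w. {x,w} \<in> E \<and> \<phi> {x,w} = Some \<eta>0)"
    have w: "{x,w} \<in> E \<and> \<phi> {x,w} = Some \<eta>0" unfolding w_def using True by (rule someI_ex)
    show ?thesis
    proof (cases "w \<in> set F")
      case True
      then have "Some (F, \<eta>0, LEAST j. F ! j = w) = Some (F', \<eta>, j)"
        using Suc.prems(1) ne \<open>\<exists>w. _\<close>
        by (simp add: z_def[symmetric] \<eta>0_def[symmetric] w_def[symmetric] Let_def) blast
      then have F': "F' = F" "\<eta> = \<eta>0" "j = (LEAST j. F ! j = w)" by auto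
      obtain k where k: "k < length F" "F ! k = w" using True by (auto simp: in_set_conv_nth)
      have "F ! j = w" unfolding F'(3) using k(2) by (rule LeastI)
      moreover have "j \<le> k" unfolding F'(3) using k(2) by (rule Least_le)
      ultimately show ?thesis using F' k w \<eta>0 Suc.prems(2) by (auto simp: z_def)
    next
      case False
      have eq: "fan_loop n E \<phi> q x C (F @ [w]) = Some (F', \<eta>, j)"
        using Suc.prems(1) ne \<open>\<exists>w. _\<close> False
        by (simp add: z_def[symmetric] \<eta>0_def[symmetric] w_def[symmetric] Let_def)
      have wx: "w \<noteq> x"
      proof
        assume "w = x"
        then have "card {x,w} = 1" by simp
        then show False using w sg by auto
      qed
      have "is_fan E \<phi> q x (F @ [w])"
        using is_fan_snoc[OF Suc.prems(2) False wx] w \<eta>0 by (simp add: z_def)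
      from Suc.IH[OF eq this] show ?thesis
        using Suc.prems(2) by (auto simp: is_fan_def nth_append)
    qed
  qed
qed

lemma make_fan_props:
  assumes "make_fan E \<phi> q e x C = Some (F, \<eta>, j)"
    and sg: "\<forall>f\<in>E. card f = 2" and e: "e \<in> E" "x \<in> e"
  shows "is_fan E \<phi> q x F \<and> e = {x, F ! 0} \<and> \<eta> \<in> missing E \<phi> q (last F) \<and> \<eta> \<in> C \<and>
    ((j = length F \<and> \<not>(\<exists>w. {x,w} \<in> E \<and> \<phi> {x,w} = Some \<eta>)) \<or>
     (j < length F \<and> \<phi> {x, F!j} = Some \<eta>))"
proof -
  have "card e = 2" using sg e by auto
  then obtain a b where ab: "e = {a,b}" "a \<noteq> b" by (auto simp: card_Suc_eq numeral_2_eq_2)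
  obtain y where y: "e = {x,y}" "y \<noteq> x" using ab e(2) by auto
  have te: "the_elem (e - {x}) = y" using y by auto
  have f0: "is_fan E \<phi> q x [y]" using y e by (auto simp: is_fan_def insert_commute)
  show ?thesis
    using fan_loop_props[OF assms(1)[unfolded make_fan_def te] f0 sg] y by auto
qed

lemma shift_fan_other:
  "(\<forall>y\<in>set ys. f \<noteq> {x,y}) \<Longrightarrow> shift_fan \<phi> x ys f = \<phi> f"
  by (induction \<phi> x ys rule: shift_fan.induct) auto

lemma shift_fan_last:
  "ys \<noteq> [] \<Longrightarrow> distinct ys \<Longrightarrow> x \<notin> set ys \<Longrightarrow> shift_fan \<phi> x ys {x, last ys} = None"
proof (induction \<phi> x ys rule: shift_fan.induct)
  case (3 \<phi> x y z ys)
  have "last (z#ys) \<noteq> y" using 3(3) by (metis distinct.simps(2) last_in_set list.distinct(1))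
  moreover have "y \<noteq> x" using 3 by auto
  ultimately have "{x, last (z#ys)} \<noteq> {x,y}" by (metis doubleton_eq_right)
  then show ?case using 3 by auto
qed auto

lemma shift_fan_nth:
  "Suc i < length ys \<Longrightarrow> distinct ys \<Longrightarrow> x \<notin> set ys \<Longrightarrow>
   shift_fan \<phi> x ys {x, ys!i} = \<phi> {x, ys ! Suc i}"
proof (induction \<phi> x ys arbitrary: i rule: shift_fan.induct)
  case (3 \<phi> x y z ys)
  show ?case
  proof (cases i)
    case 0 then show ?thesis by simp
  next
    case (Suc i')
    have m: "(z#ys) ! i' \<in> set (z#ys)" using 3(2) Suc by (intro nth_mem) simp
    then have "(z#ys) ! i' \<noteq> y" using 3(3) by auto
    moreover have "(z#ys) ! i' \<noteq> x" using 3(4) m by auto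
    ultimately have "{x, (z#ys)!i'} \<noteq> {x,y}" by (metis doubleton_eq_right)
    then show ?thesis using 3 Suc by auto
  qed
qed auto

lemma shift_fan_SomeE:
  assumes "(shift_fan \<phi> x ys) f = Some c" "distinct ys" "x \<notin> set ys"
  shows "((\<forall>y\<in>set ys. f \<noteq> {x,y}) \<and> \<phi> f = Some c) \<or>
         (\<exists>i. Suc i < length ys \<and> f = {x, ys!i} \<and> \<phi> {x, ys ! Suc i} = Some c)"
proof (cases "\<forall>y\<in>set ys. f \<noteq> {x,y}")
  case True then have "shift_fan \<phi> x ys f = \<phi> f" by (rule shift_fan_other)
  then show ?thesis using True assms(1) by simp
next
  case False
  then obtain i where i: "i < length ys" "f = {x, ys!i}" by (auto simp: in_set_conv_nth)
  show ?thesis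
  proof (cases "Suc i < length ys")
    case True then have "shift_fan \<phi> x ys f = \<phi> {x, ys ! Suc i}" using i assms(2,3) shift_fan_nth by simp
    then show ?thesis using True i assms(1) by auto
  next
    case False
    then have "i = length ys - 1" using i by simp
    moreover have "ys \<noteq> []" using i by auto
    ultimately have "ys!i = last ys" by (simp add: last_conv_nth)
    moreover have "ys \<noteq> []" using i by auto
    ultimately have "shift_fan \<phi> x ys f = None" using assms(2,3) shift_fan_last i by simp
    then show ?thesis using assms(1) by simp
  qed
qed

lemma proper_shift_fan:
  assumes ne: "ys \<noteq> []" and d: "distinct ys" and x: "x \<notin> set ys" and pr: "proper_coloring \<phi>"
    and hc: "\<forall>i. 0 < i \<and> i < length ys \<longrightarrow> (\<exists>c. \<phi> {x, ys!i} = Some c \<and> free_at \<phi> (ys!(i-1)) c)"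
    and hx: "free_at \<phi> x \<gamma>" and hl: "free_at \<phi> (last ys) \<gamma>"
  shows "proper_coloring ((shift_fan \<phi> x ys)({x, last ys} := Some \<gamma>))"
proof -
  define \<psi> where "\<psi> = (shift_fan \<phi> x ys)({x, last ys} := Some \<gamma>)"
  have cls: "\<And>f c. \<psi> f = Some c \<Longrightarrow>
     ((\<forall>y\<in>set ys. f \<noteq> {x,y}) \<and> \<phi> f = Some c) \<or>
     (\<exists>i. Suc i < length ys \<and> f = {x, ys!i} \<and> \<phi> {x, ys ! Suc i} = Some c) \<or>
     (f = {x, last ys} \<and> c = \<gamma>)"
  proof -
    fix f c assume "\<psi> f = Some c"
    then show "?thesis f c"
      using shift_fan_SomeE[of \<phi> x ys f c, OF _ d x] by (cases "f = {x, last ys}") (auto simp: \<psi>_def)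
  qed
  have lastn: "last ys = ys ! (length ys - 1)" using ne by (simp add: last_conv_nth)
  have yx: "\<And>i. i < length ys \<Longrightarrow> ys ! i \<noteq> x" using x by (auto simp: in_set_conv_nth)
  { fix u w1 w2 c
    assume a1: "\<psi> {u,w1} = Some c" and a2: "\<psi> {u,w2} = Some c"
    have nm: False if n1: "\<forall>y\<in>set ys. {u,w1} \<noteq> {x,y}" "\<phi> {u,w1} = Some c"
       and m2: "Suc i < length ys" "{u,w2} = {x, ys!i}" "\<phi> {x, ys ! Suc i} = Some c" for i w1 w2
    proof (cases "u = x")
      case True
      then have "w1 = ys ! Suc i" using n1(2) m2(3) pr by (metis proper_coloringD)
      moreover have "ys ! Suc i \<in> set ys" using m2(1) by simp
      ultimately show False using n1(1) True by blast
    next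
      case False
      then have "u = ys ! i" using m2(2) by (metis doubleton_eq_iff)
      moreover obtain c' where "\<phi> {x, ys ! Suc i} = Some c'" "free_at \<phi> (ys ! i) c'"
        using hc[rule_format, of "Suc i"] m2(1) by auto
      ultimately show False using n1(2) m2(3) by (metis free_atD option.inject)
    qed
    have nl: False if n1: "\<forall>y\<in>set ys. {u,w1} \<noteq> {x,y}" "\<phi> {u,w1} = Some \<gamma>"
       and l2: "{u,w2} = {x, last ys}" for w1 w2
    proof (cases "u = x")
      case True then show False using hx n1(2) by (metis free_atD)
    next
      case False
      then have "u = last ys" using l2 by (metis doubleton_eq_iff)
      then show False using hl n1(2) by (metis free_atD)
    qed
    have ml: False if m1: "Suc i < length ys" "{u,w1} = {x, ys!i}" "\<phi> {x, ys ! Suc i} = Some \<gamma>"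
       and l2: "{u,w2} = {x, last ys}" for i w1 w2
    proof (cases "u = x")
      case True then show False using hx m1(3) by (metis free_atD)
    next
      case False
      then have "u = ys ! i" "u = last ys" using m1(2) l2 by (metis doubleton_eq_iff)+
      then have "i = length ys - 1" using d m1(1) lastn by (simp add: nth_eq_iff_index_eq)
      then show False using m1(1) by simp
    qed
    have mm: "w1 = w2" if m1: "Suc i < length ys" "{u,w1} = {x, ys!i}" "\<phi> {x, ys ! Suc i} = Some c"
       and m2: "Suc j < length ys" "{u,w2} = {x, ys!j}" "\<phi> {x, ys ! Suc j} = Some c" for i j
    proof -
      have "ys ! Suc i = ys ! Suc j" using m1(3) m2(3) pr by (metis proper_coloringD)
      then have "i = j" using d m1(1) m2(1) by (simp add: nth_eq_iff_index_eq)
      then show ?thesis using m1(2) m2(2) by (metis doubleton_eq_right)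
    qed
    have "w1 = w2"
    proof -
      from cls[OF a1] consider (N1) "\<forall>y\<in>set ys. {u,w1} \<noteq> {x,y}" "\<phi> {u,w1} = Some c"
        | (M1) i where "Suc i < length ys" "{u,w1} = {x, ys!i}" "\<phi> {x, ys ! Suc i} = Some c"
        | (L1) "{u,w1} = {x, last ys}" "c = \<gamma>" by blast
      then show ?thesis
      proof cases
        case N1
        from cls[OF a2] consider (N2) "\<forall>y\<in>set ys. {u,w2} \<noteq> {x,y}" "\<phi> {u,w2} = Some c"
          | (M2) j where "Suc j < length ys" "{u,w2} = {x, ys!j}" "\<phi> {x, ys ! Suc j} = Some c"
          | (L2) "{u,w2} = {x, last ys}" "c = \<gamma>" by blast
        then show ?thesis
        proof cases
          case N2 then show ?thesis using N1 pr proper_coloringD by metis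
        next
          case (M2 j) then show ?thesis using N1 nm by blast
        next
          case L2 then show ?thesis using N1 nl by blast
        qed
      next
        case (M1 i)
        from cls[OF a2] consider (N2) "\<forall>y\<in>set ys. {u,w2} \<noteq> {x,y}" "\<phi> {u,w2} = Some c"
          | (M2) j where "Suc j < length ys" "{u,w2} = {x, ys!j}" "\<phi> {x, ys ! Suc j} = Some c"
          | (L2) "{u,w2} = {x, last ys}" "c = \<gamma>" by blast
        then show ?thesis
        proof cases
          case N2 then show ?thesis using M1 nm by blast
        next
          case (M2 j) then show ?thesis using M1 mm by blast
        next
          case L2 then show ?thesis using M1 ml by blast
        qed
      next
        case L1
        from cls[OF a2] consider (N2) "\<forall>y\<in>set ys. {u,w2} \<noteq> {x,y}" "\<phi> {u,w2} = Some c"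
          | (M2) j where "Suc j < length ys" "{u,w2} = {x, ys!j}" "\<phi> {x, ys ! Suc j} = Some c"
          | (L2) "{u,w2} = {x, last ys}" "c = \<gamma>" by blast
        then show ?thesis
        proof cases
          case N2 then show ?thesis using L1 nl by blast
        next
          case (M2 j) then show ?thesis using L1 ml by blast
        next
          case L2 then show ?thesis using L1 doubleton_eq_right by metis
        qed
      qed
    qed
  }
  then have "proper_coloring \<psi>" unfolding proper_coloring_def by blast
  then show ?thesis unfolding \<psi>_def .
qed

section \<open>Flipping alternating paths\<close>

definition path_edges :: "'a list \<Rightarrow> 'a set set" where
  "path_edges P = {{P!t, P!Suc t} | t. Suc t < length P}"

lemma path_edges_Cons_Cons: "path_edges (u # w # rest) = insert {u,w} (path_edges (w # rest))"
proof (rule set_eqI)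
  fix f
  show "f \<in> path_edges (u # w # rest) \<longleftrightarrow> f \<in> insert {u,w} (path_edges (w # rest))"
  proof
    assume "f \<in> path_edges (u # w # rest)"
    then obtain t where t: "Suc t < length (u#w#rest)" "f = {(u#w#rest)!t, (u#w#rest)!Suc t}"
      unfolding path_edges_def by blast
    show "f \<in> insert {u,w} (path_edges (w # rest))"
    proof (cases t)
      case 0 then show ?thesis using t by simp
    next
      case (Suc t')
      then have "Suc t' < length (w#rest)" "f = {(w#rest)!t', (w#rest)!Suc t'}" using t by auto
      then show ?thesis unfolding path_edges_def by blast
    qed
  next
    assume "f \<in> insert {u,w} (path_edges (w # rest))"
    then consider "f = {u,w}" | t where "Suc t < length (w#rest)" "f = {(w#rest)!t, (w#rest)!Suc t}"
      unfolding path_edges_def by blast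
    then show "f \<in> path_edges (u # w # rest)"
    proof cases
      case 1
      then have "f = {(u#w#rest)!0, (u#w#rest)!Suc 0}" by simp
      then show ?thesis unfolding path_edges_def by force
    next
      case (2 t)
      then have "Suc (Suc t) < length (u#w#rest)" "f = {(u#w#rest)!Suc t, (u#w#rest)!Suc (Suc t)}" by auto
      then show ?thesis unfolding path_edges_def by blast
    qed
  qed
qed

lemma path_edges_short: "length P \<le> 1 \<Longrightarrow> path_edges P = {}"
  unfolding path_edges_def by auto

lemma path_edgesI: "Suc t < length P \<Longrightarrow> {P!t, P!Suc t} \<in> path_edges P"
  unfolding path_edges_def by blast

lemma path_edges_mem: "{u,w} \<in> path_edges P \<Longrightarrow> u \<in> set P"
  unfolding path_edges_def by (auto simp: doubleton_eq_iff)

lemma flip_path_eq: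
  "flip_path \<phi> \<alpha> \<beta> P f = (if f \<in> path_edges P then swap_col \<alpha> \<beta> (\<phi> f) else \<phi> f)"
proof (induction \<phi> \<alpha> \<beta> P rule: flip_path.induct)
  case (1 \<phi> \<alpha> \<beta> u w rest)
  then show ?case by (simp add: path_edges_Cons_Cons)
qed (simp_all add: path_edges_short)

lemma swap_None[simp]: "swap_col \<alpha> \<beta> None = None"
  by (simp add: swap_col_def)

lemma swap_col_swap_col: "\<alpha> \<noteq> \<beta> \<Longrightarrow> swap_col \<alpha> \<beta> (swap_col \<alpha> \<beta> x) = x"
  by (cases x) (auto simp: swap_col_def)

lemma swap_col_inj: "\<alpha> \<noteq> \<beta> \<Longrightarrow> swap_col \<alpha> \<beta> x = swap_col \<alpha> \<beta> y \<Longrightarrow> x = y"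
  by (metis swap_col_swap_col)

lemma swap_col_alt_color: "swap_col \<alpha> \<beta> (Some (alt_color \<alpha> \<beta> t)) = Some (alt_color \<alpha> \<beta> (Suc t))"
  by (simp add: swap_col_def alt_color_def)

lemma flip_path_other_color: "c \<noteq> \<alpha> \<Longrightarrow> c \<noteq> \<beta> \<Longrightarrow>
   flip_path \<phi> \<alpha> \<beta> P f = Some c \<longleftrightarrow> \<phi> f = Some c"
  by (cases "\<phi> f") (auto simp: flip_path_eq swap_col_def)

lemma flip_path_None_iff: "flip_path \<phi> \<alpha> \<beta> P f = None \<longleftrightarrow> \<phi> f = None"
  by (cases "\<phi> f") (auto simp: flip_path_eq swap_col_def)

lemma flip_path_edge_closed:
  assumes pr: "proper_coloring \<phi>" and a: "alternating \<phi> \<alpha> \<beta> P" and fx: "free_at \<phi> (P!0) \<beta>"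
    and fe: "length P > 1 \<Longrightarrow> free_at \<phi> (last P) (alt_color \<alpha> \<beta> (length P - 1))"
    and t: "Suc t < length P" and f1: "{u,w1} = {P!t, P!Suc t}"
    and c2: "\<phi> {u,w2} = Some c2" "c2 = \<alpha> \<or> c2 = \<beta>" "c2 \<noteq> alt_color \<alpha> \<beta> t"
  shows "{u,w2} \<in> path_edges P"
proof -
  have ae: "\<And>t. Suc t < length P \<Longrightarrow> \<phi> {P!t, P!Suc t} = Some (alt_color \<alpha> \<beta> t)"
    using a by (simp add: alternating_def)
  have cc: "c2 = alt_color \<alpha> \<beta> (Suc t)" using alt_color_other c2(2,3) by blast
  show ?thesis
  proof (cases "u = P!t")
    case True
    show ?thesis
    proof (cases t)
      case 0
      then have "c2 = \<beta>" using cc by (simp add: alt_color_def)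
      then show ?thesis using fx True 0 c2(1) free_atD by metis
    next
      case (Suc t')
      have "\<phi> {P!t', P!t} = Some c2" using ae[of t'] Suc t cc by simp
      then have "w2 = P!t'" using c2(1) True pr proper_coloringD' by metis
      then have "{u,w2} = {P!t', P!Suc t'}" using True Suc by (simp add: insert_commute)
      moreover have "Suc t' < length P" using t Suc by simp
      ultimately show ?thesis unfolding path_edges_def by blast
    qed
  next
    case False
    then have u: "u = P!Suc t" using f1 by (metis doubleton_eq_iff)
    show ?thesis
    proof (cases "Suc (Suc t) < length P")
      case True
      have "\<phi> {P!Suc t, P!Suc (Suc t)} = Some c2" using ae[OF True] cc by simp
      then have "w2 = P!Suc (Suc t)" using c2(1) u pr proper_coloringD by metis
      then show ?thesis using u True unfolding path_edges_def by blast
    next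
      case False
      then have st: "Suc t = length P - 1" using t by simp
      have "P \<noteq> []" using t by auto
      then have "last P = P!Suc t" using st by (simp add: last_conv_nth)
      note this st
      moreover have "length P > 1" using t by simp
      ultimately have "free_at \<phi> (P!Suc t) c2" using fe cc by metis
      then show ?thesis using u c2(1) free_atD by metis
    qed
  qed
qed

lemma proper_flip_path:
  assumes pr: "proper_coloring \<phi>" and ab: "\<alpha> \<noteq> \<beta>" and a: "alternating \<phi> \<alpha> \<beta> P" and fx: "free_at \<phi> (P!0) \<beta>"
    and fe: "length P > 1 \<Longrightarrow> free_at \<phi> (last P) (alt_color \<alpha> \<beta> (length P - 1))"
  shows "proper_coloring (flip_path \<phi> \<alpha> \<beta> P)"
proof -
  define \<psi> where "\<psi> = flip_path \<phi> \<alpha> \<beta> P"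
  have ae: "\<And>t. Suc t < length P \<Longrightarrow> \<phi> {P!t, P!Suc t} = Some (alt_color \<alpha> \<beta> t)"
    using a by (simp add: alternating_def)
  have mixed: False if p1: "{u,w1} \<in> path_edges P" and p2: "{u,w2} \<notin> path_edges P"
      and s1: "\<psi> {u,w1} = Some c" and s2: "\<psi> {u,w2} = Some c" for u w1 w2 c
  proof -
    obtain t where t: "Suc t < length P" "{u,w1} = {P!t, P!Suc t}" using p1 unfolding path_edges_def by blast
    have "\<phi> {u,w1} = Some (alt_color \<alpha> \<beta> t)" using ae[OF t(1)] t(2) by simp
    then have "c = alt_color \<alpha> \<beta> (Suc t)" using s1 p1 swap_col_alt_color by (simp add: \<psi>_def flip_path_eq)
    moreover have "\<phi> {u,w2} = Some c" using s2 p2 by (simp add: \<psi>_def flip_path_eq)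
    ultimately have "{u,w2} \<in> path_edges P"
      using flip_path_edge_closed[OF pr a fx fe t(1) t(2), of w2 c] ab alt_color_cases alt_color_Suc_neq by metis
    then show False using p2 by simp
  qed
  { fix u w1 w2 c
    assume s1: "\<psi> {u,w1} = Some c" and s2: "\<psi> {u,w2} = Some c"
    have "w1 = w2"
    proof (cases "{u,w1} \<in> path_edges P \<longleftrightarrow> {u,w2} \<in> path_edges P")
      case True
      then have "\<phi> {u,w1} = \<phi> {u,w2}" using s1 s2 swap_col_inj[OF ab]
        by (auto simp: \<psi>_def flip_path_eq split: if_splits)
      moreover obtain c' where "\<phi> {u,w1} = Some c'"
        using s1 by (cases "\<phi> {u,w1}") (auto simp: \<psi>_def flip_path_eq split: if_splits)
      ultimately show ?thesis using pr proper_coloringD by metis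
    next
      case False
      then show ?thesis using mixed s1 s2 by blast
    qed }
  then show ?thesis unfolding proper_coloring_def \<psi>_def by blast
qed

lemma proper_coloring_uncolor: "proper_coloring \<phi> \<Longrightarrow> proper_coloring (\<phi>(f := None))"
  unfolding proper_coloring_def by (auto split: if_splits)

lemma free_at_mono:
  "free_at \<phi> z c \<Longrightarrow> \<forall>f c. \<phi>1 f = Some c \<longrightarrow> \<phi> f = Some c \<Longrightarrow> free_at \<phi>1 z c"
  by (auto simp: free_at_def)

lemma free_at_flip_path_other:
  "free_at \<phi> z c \<Longrightarrow> c \<noteq> \<alpha> \<Longrightarrow> c \<noteq> \<beta> \<Longrightarrow> free_at (flip_path \<phi> \<alpha> \<beta> P) z c"
  by (simp add: free_at_def flip_path_other_color)

lemma free_at_flip_path_off: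
  "free_at \<phi> z c \<Longrightarrow> z \<notin> set P \<Longrightarrow> free_at (flip_path \<phi> \<alpha> \<beta> P) z c"
  using path_edges_mem by (fastforce simp: free_at_def flip_path_eq)

lemma flip_path_end_free:
  assumes pr: "proper_coloring \<phi>" and ab: "\<alpha> \<noteq> \<beta>" and a: "alternating \<phi> \<alpha> \<beta> P"
    and P: "1 < length P" and fz: "free_at \<phi> (last P) \<alpha>"
  shows "free_at (flip_path \<phi> \<alpha> \<beta> P) (last P) \<beta>"
  unfolding free_at_def
proof (intro allI notI)
  fix w assume w: "flip_path \<phi> \<alpha> \<beta> P {last P, w} = Some \<beta>"
  define s where "s = length P - 2"
  have len: "length P = Suc (Suc s)" using P by (simp add: s_def)
  moreover have "P \<noteq> []" using P by auto
  ultimately have s: "Suc s < length P" "last P = P ! Suc s"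
    by (auto simp: last_conv_nth)
  have e1: "\<phi> {P!s, last P} = Some (alt_color \<alpha> \<beta> s)"
    using a s by (simp add: alternating_def)
  then have e1': "\<phi> {P!s, last P} = Some \<beta>"
    using free_atD'[OF fz] alt_color_cases by metis
  show False
  proof (cases "{last P, w} \<in> path_edges P")
    case True
    then have "\<phi> {last P, w} = Some \<alpha>" using w ab
      by (cases "\<phi> {last P, w}") (auto simp: flip_path_eq swap_col_def split: if_splits)
    then show False using free_atD[OF fz] by blast
  next
    case False
    then have "\<phi> {last P, w} = Some \<beta>" using w by (simp add: flip_path_eq)
    then have "w = P!s" using proper_coloringD'[OF pr e1'] by blast
    then have "{last P, w} \<in> path_edges P" using path_edgesI[OF s(1)] s(2) by (simp add: insert_commute)
    then show False using False by blast
  qed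
qed

lemma alternating_take_uncolor:
  assumes pr: "proper_coloring \<phi>" and a: "alternating \<phi> \<alpha> \<beta> P" and d: "distinct P"
    and l': "1 \<le> l'" "l' < length P"
  defines "\<phi>1 \<equiv> \<phi>({P!(l'-1), P!l'} := None)"
  shows "alternating \<phi>1 \<alpha> \<beta> (take l' P)"
    and "free_at \<phi>1 (last (take l' P)) (alt_color \<alpha> \<beta> (l' - 1))"
proof -
  have ae: "\<And>t. Suc t < length P \<Longrightarrow> \<phi> {P!t, P!Suc t} = Some (alt_color \<alpha> \<beta> t)"
    using a by (simp add: alternating_def)
  show "alternating \<phi>1 \<alpha> \<beta> (take l' P)" unfolding alternating_def
  proof (intro allI impI)
    fix t assume "Suc t < length (take l' P)"
    then have tl: "Suc t < l'" using l' by simp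
    have "{P!t, P!Suc t} \<noteq> {P!(l'-1), P!l'}"
      using d tl l' by (auto simp: doubleton_eq_iff nth_eq_iff_index_eq)
    then show "\<phi>1 {take l' P ! t, take l' P ! Suc t} = Some (alt_color \<alpha> \<beta> t)"
      using ae[of t] tl l' by (simp add: \<phi>1_def)
  qed
  have last: "last (take l' P) = P!(l'-1)"
    using l' by (subst last_conv_nth) (auto simp: min_def)
  show "free_at \<phi>1 (last (take l' P)) (alt_color \<alpha> \<beta> (l' - 1))"
    unfolding free_at_def last
  proof (intro allI notI)
    fix w assume w: "\<phi>1 {P!(l'-1), w} = Some (alt_color \<alpha> \<beta> (l' - 1))"
    then have "\<phi> {P!(l'-1), w} = Some (alt_color \<alpha> \<beta> (l' - 1))" "{P!(l'-1), w} \<noteq> {P!(l'-1), P!l'}"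
      by (auto simp: \<phi>1_def split: if_splits)
    moreover have "\<phi> {P!(l'-1), P!l'} = Some (alt_color \<alpha> \<beta> (l' - 1))"
      using ae[of "l'-1"] l' by simp
    ultimately show False using proper_coloringD[OF pr] by blast
  qed
qed

section \<open>Stage 1 keeps the colouring proper\<close>

definition stage1_inv :: "'a set set \<Rightarrow> 'a set set \<Rightarrow> 'a coloring \<Rightarrow> bool" where
  "stage1_inv E U \<phi> \<longleftrightarrow> proper_coloring \<phi> \<and> coloring_on E \<phi> \<and> U \<subseteq> E \<and> (\<forall>f\<in>U. \<phi> f = None)"

lemma stage1_inv_shift_fan:
  assumes ne: "ys \<noteq> []" and d: "distinct ys" and x: "x \<notin> set ys" and pr: "proper_coloring \<phi>"
    and sp: "coloring_on E \<phi>" and ed: "\<forall>y\<in>set ys. {x,y} \<in> E"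
    and hc: "\<forall>i. 0 < i \<and> i < length ys \<longrightarrow> (\<exists>c. \<phi> {x, ys!i} = Some c \<and> free_at \<phi> (ys!(i-1)) c)"
    and hx: "free_at \<phi> x \<gamma>" and hl: "free_at \<phi> (last ys) \<gamma>"
    and e: "e = {x, ys!0}" and UE: "U \<subseteq> E" and Un: "\<forall>f\<in>U-{e}. \<phi> f = None"
  shows "stage1_inv E (U - {e}) ((shift_fan \<phi> x ys)({x, last ys} := Some \<gamma>))"
proof -
  define \<psi> where "\<psi> = (shift_fan \<phi> x ys)({x, last ys} := Some \<gamma>)"
  have p: "proper_coloring \<psi>" unfolding \<psi>_def by (rule proper_shift_fan[OF ne d x pr hc hx hl])
  have s: "coloring_on E \<psi>" unfolding coloring_on_def
  proof (intro allI impI)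
    fix f assume a: "\<psi> f \<noteq> None"
    show "f \<in> E"
    proof (cases "f = {x, last ys}")
      case True then show ?thesis using ed ne by simp
    next
      case False
      then obtain c where "shift_fan \<phi> x ys f = Some c" using a by (auto simp: \<psi>_def)
      from shift_fan_SomeE[OF this d x] show ?thesis
      proof
        assume "(\<forall>y\<in>set ys. f \<noteq> {x,y}) \<and> \<phi> f = Some c"
        then show ?thesis using sp by (auto simp: coloring_on_def)
      next
        assume "\<exists>i. Suc i < length ys \<and> f = {x, ys!i} \<and> \<phi> {x, ys ! Suc i} = Some c"
        then obtain i where "Suc i < length ys" "f = {x, ys!i}" by blast
        then show ?thesis using ed by simp
      qed
    qed
  qed
  have u: "\<forall>f\<in>U-{e}. \<psi> f = None"
  proof
    fix f assume f: "f \<in> U - {e}"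
    have nf: "\<forall>y\<in>set ys. f \<noteq> {x,y}"
    proof
      fix y assume "y \<in> set ys"
      then obtain i where i: "i < length ys" "ys!i = y" by (auto simp: in_set_conv_nth)
      show "f \<noteq> {x,y}"
      proof (cases i)
        case 0 then show ?thesis using f e i by auto
      next
        case (Suc i')
        then obtain c where "\<phi> {x, ys!i} = Some c" using hc[rule_format, of i] i by auto
        moreover have "\<phi> f = None" using Un f by blast
        ultimately show ?thesis using i by auto
      qed
    qed
    then have "f \<noteq> {x, last ys}" using ne by simp
    then show "\<psi> f = None" using nf shift_fan_other[OF nf] Un f by (simp add: \<psi>_def)
  qed
  show ?thesis using p s u UE unfolding stage1_inv_def \<psi>_def by blast
qed

locale vizing_step =
  fixes E :: "'a set set" and \<phi> :: "'a coloring" and q :: nat and x :: 'a and F :: "'a list"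
    and j :: nat and \<alpha> \<beta> :: nat and U :: "'a set set" and e :: "'a set"
  assumes fI: "is_fan E \<phi> q x F" and pr: "proper_coloring \<phi>" and sp: "coloring_on E \<phi>"
    and j0: "0 < j" and jl: "j < length F" and xj: "\<phi> {x, F!j} = Some \<alpha>"
    and fx: "free_at \<phi> x \<beta>" and ab: "\<alpha> \<noteq> \<beta>"
    and e: "e = {x, F!0}" and UE: "U \<subseteq> E" and Un: "\<forall>f\<in>U. \<phi> f = None"
begin

lemma fan_facts: "distinct F" "x \<notin> set F" "F \<noteq> []" "\<forall>y\<in>set F. {x,y} \<in> E"
  using fI by (auto simp: is_fan_def)

lemma prev_free: "free_at \<phi> (F!(j-1)) \<alpha>"
proof -
  obtain c where "\<phi> {x, F!j} = Some c" "free_at \<phi> (F!(j-1)) c" using is_fanE[OF fI sp j0 jl] .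
  then show ?thesis using xj by simp
qed

lemma prev_not_start: "F!(j-1) \<noteq> x"
  using fan_facts(2) jl by (metis less_imp_diff_less nth_mem)

lemma fan_color_other:
  assumes i: "0 < i" "i < length F" "i \<noteq> j"
  obtains c where "\<phi> {x, F!i} = Some c" "free_at \<phi> (F!(i-1)) c" "c \<noteq> \<alpha>" "c \<noteq> \<beta>"
proof -
  obtain c where c: "\<phi> {x, F!i} = Some c" "free_at \<phi> (F!(i-1)) c" by (rule is_fanE[OF fI sp i(1,2)])
  have "c \<noteq> \<alpha>"
  proof
    assume "c = \<alpha>"
    then have "F!i = F!j" using proper_coloringD[OF pr _ xj] c(1) by blast
    then show False using fan_facts(1) i jl by (simp add: nth_eq_iff_index_eq)
  qed
  moreover have "c \<noteq> \<beta>" using c(1) free_atD[OF fx] by blast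
  ultimately show ?thesis using that c by blast
qed

lemma flip_whole:
  assumes pa: "P \<noteq> []" "P!0 = x" "alternating \<phi> \<alpha> \<beta> P" "1 < length P" "P!1 = F!j"
    and fe: "free_at \<phi> (last P) (alt_color \<alpha> \<beta> (length P - 1))"
    and lastP: "last P = F!(j-1)" and fl: "free_at \<phi> (last F) \<alpha>"
  shows "stage1_inv E (U - {e}) ((shift_fan (flip_path \<phi> \<alpha> \<beta> P) x F)({x, last F} := Some \<alpha>))"
proof -
  define \<phi>2 where "\<phi>2 = flip_path \<phi> \<alpha> \<beta> P"
  have pr2: "proper_coloring \<phi>2"
    unfolding \<phi>2_def using fx pa(2) by (intro proper_flip_path[OF pr ab pa(3) _ fe]) simp
  have sp2: "coloring_on E \<phi>2" using sp unfolding coloring_on_def \<phi>2_def by (simp add: flip_path_None_iff)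
  have p01: "{x, F!j} \<in> path_edges P" using path_edgesI[of 0 P] pa by simp
  have hc2: "\<forall>i. 0 < i \<and> i < length F \<longrightarrow> (\<exists>c. \<phi>2 {x, F!i} = Some c \<and> free_at \<phi>2 (F!(i-1)) c)"
  proof (intro allI impI)
    fix i assume i: "0 < i \<and> i < length F"
    show "\<exists>c. \<phi>2 {x, F!i} = Some c \<and> free_at \<phi>2 (F!(i-1)) c"
    proof (cases "i = j")
      case True
      have "\<phi>2 {x, F!j} = Some \<beta>" using p01 xj by (simp add: \<phi>2_def flip_path_eq swap_col_def)
      moreover have "free_at \<phi>2 (F!(j-1)) \<beta>"
        using flip_path_end_free[OF pr ab pa(3,4)] prev_free lastP by (simp add: \<phi>2_def)
      ultimately show ?thesis using True by blast
    next
      case False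
      obtain c where "\<phi> {x, F!i} = Some c" "free_at \<phi> (F!(i-1)) c" "c \<noteq> \<alpha>" "c \<noteq> \<beta>"
        by (rule fan_color_other[of i]) (use i False in auto)
      then show ?thesis
        unfolding \<phi>2_def by (intro exI[of _ c]) (simp add: flip_path_other_color free_at_flip_path_other)
    qed
  qed
  have hx2: "free_at \<phi>2 x \<alpha>"
    unfolding free_at_def
  proof (intro allI notI)
    fix w assume w: "\<phi>2 {x,w} = Some \<alpha>"
    show False
    proof (cases "{x,w} \<in> path_edges P")
      case True
      then have "\<phi> {x,w} = Some \<beta>" using w ab
        by (cases "\<phi> {x,w}") (auto simp: \<phi>2_def flip_path_eq swap_col_def split: if_splits)
      then show False using free_atD[OF fx] by blast
    next
      case False
      then have "\<phi> {x,w} = Some \<alpha>" using w by (simp add: \<phi>2_def flip_path_eq)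
      then have "w = F!j" using proper_coloringD[OF pr _ xj] by blast
      then show False using p01 False by simp
    qed
  qed
  have "last F \<notin> set P"
  proof
    assume m: "last F \<in> set P"
    have "last F \<noteq> P!0" using pa(2) fan_facts(2,3) last_in_set by metis
    then have "last F = F!(j-1)" using alternating_free_mem_last[OF pa(3) m _ fl] lastP by simp
    then show False using fan_facts(1,3) j0 jl by (simp add: last_conv_nth nth_eq_iff_index_eq)
  qed
  then have hl2: "free_at \<phi>2 (last F) \<alpha>" unfolding \<phi>2_def by (rule free_at_flip_path_off[OF fl])
  have Un2: "\<forall>f\<in>U-{e}. \<phi>2 f = None" using Un by (simp add: \<phi>2_def flip_path_None_iff)
  show ?thesis unfolding \<phi>2_def[symmetric]
    by (rule stage1_inv_shift_fan[OF fan_facts(3,1,2) pr2 sp2 fan_facts(4) hc2 hx2 hl2 e UE Un2])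
qed

lemma flip_prefix:
  assumes pr1: "proper_coloring \<phi>1" and sub: "\<forall>f c. \<phi>1 f = Some c \<longrightarrow> \<phi> f = Some c"
    and Un1: "\<forall>f\<in>U. \<phi>1 f = None"
    and pa: "P' \<noteq> []" "P'!0 = x" "alternating \<phi>1 \<alpha> \<beta> P'"
    and fe1: "1 < length P' \<Longrightarrow> free_at \<phi>1 (last P') (alt_color \<alpha> \<beta> (length P' - 1))"
    and notin: "F!(j-1) \<notin> set P'"
    and xedge: "\<forall>w. \<phi>1 {x,w} = Some \<alpha> \<longrightarrow> {x,w} \<in> path_edges P'"
    and kept: "\<forall>i. 0 < i \<and> i < j \<longrightarrow> \<phi>1 {x, F!i} = \<phi> {x, F!i}"
  shows "stage1_inv E (U - {e}) ((shift_fan (flip_path \<phi>1 \<alpha> \<beta> P') x (take j F))({x, F!(j-1)} := Some \<alpha>))"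
proof -
  define \<phi>2 where "\<phi>2 = flip_path \<phi>1 \<alpha> \<beta> P'"
  define ys where "ys = take j F"
  have sp1: "coloring_on E \<phi>1" using sp sub unfolding coloring_on_def by (metis not_None_eq)
  have "free_at \<phi>1 (P'!0) \<beta>" using free_at_mono[OF fx sub] pa(2) by simp
  then have pr2: "proper_coloring \<phi>2" unfolding \<phi>2_def by (rule proper_flip_path[OF pr1 ab pa(3) _ fe1])
  have sp2: "coloring_on E \<phi>2" using sp1 unfolding coloring_on_def \<phi>2_def by (simp add: flip_path_None_iff)
  have ne: "ys \<noteq> []" using j0 fan_facts(3) by (simp add: ys_def)
  then have lys: "last ys = F!(j-1)"
    using j0 jl by (subst last_conv_nth) (auto simp: ys_def min_def)
  have hc2: "\<forall>i. 0 < i \<and> i < length ys \<longrightarrow> (\<exists>c. \<phi>2 {x, ys!i} = Some c \<and> free_at \<phi>2 (ys!(i-1)) c)"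
  proof (intro allI impI)
    fix i assume i: "0 < i \<and> i < length ys"
    then have ij: "i < j" "ys!i = F!i" "ys!(i-1) = F!(i-1)" using jl by (auto simp: ys_def)
    obtain c where c: "\<phi> {x, F!i} = Some c" "free_at \<phi> (F!(i-1)) c" "c \<noteq> \<alpha>" "c \<noteq> \<beta>"
      by (rule fan_color_other[of i]) (use i ij jl in auto)
    have "\<phi>2 {x, F!i} = Some c" using kept i ij c by (simp add: \<phi>2_def flip_path_other_color)
    moreover have "free_at \<phi>2 (F!(i-1)) c"
      unfolding \<phi>2_def using c by (intro free_at_flip_path_other free_at_mono[OF _ sub])
    ultimately show "\<exists>c. \<phi>2 {x, ys!i} = Some c \<and> free_at \<phi>2 (ys!(i-1)) c" using ij by auto
  qed
  have hx2: "free_at \<phi>2 x \<alpha>"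
    unfolding free_at_def
  proof (intro allI notI)
    fix w assume w: "\<phi>2 {x,w} = Some \<alpha>"
    show False
    proof (cases "{x,w} \<in> path_edges P'")
      case True
      then have "\<phi>1 {x,w} = Some \<beta>" using w ab
        by (cases "\<phi>1 {x,w}") (auto simp: \<phi>2_def flip_path_eq swap_col_def split: if_splits)
      then show False using free_atD[OF free_at_mono[OF fx sub]] by blast
    next
      case False
      then have "\<phi>1 {x,w} = Some \<alpha>" using w by (simp add: \<phi>2_def flip_path_eq)
      then show False using xedge False by blast
    qed
  qed
  have hl2: "free_at \<phi>2 (last ys) \<alpha>"
    unfolding lys \<phi>2_def by (rule free_at_flip_path_off[OF free_at_mono[OF prev_free sub] notin])
  have Un2: "\<forall>f\<in>U-{e}. \<phi>2 f = None" using Un1 by (simp add: \<phi>2_def flip_path_None_iff)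
  have "stage1_inv E (U - {e}) ((shift_fan \<phi>2 x ys)({x, last ys} := Some \<alpha>))"
    using fan_facts j0 e
    by (intro stage1_inv_shift_fan[OF ne _ _ pr2 sp2 _ hc2 hx2 hl2 _ UE Un2])
       (auto simp: ys_def dest: in_set_takeD)
  then have "stage1_inv E (U - {e}) ((shift_fan \<phi>2 x ys)({x, F!(j-1)} := Some \<alpha>))" by (simp only: lys)
  then show ?thesis unfolding \<phi>2_def ys_def .
qed

lemma untruncated_step:
  assumes pa: "alternating \<phi> \<alpha> \<beta> P" "P!0 = x" "1 < length P" "P!1 = F!j"
    and fe: "free_at \<phi> (last P) (alt_color \<alpha> \<beta> (length P - 1))" and fl: "free_at \<phi> (last F) \<alpha>"
  shows "stage1_inv E (U - {e})
    (if last P = F!(j-1) then (shift_fan (flip_path \<phi> \<alpha> \<beta> P) x F)({x, last F} := Some \<alpha>)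
     else (shift_fan (flip_path \<phi> \<alpha> \<beta> P) x (take j F))({x, F!(j-1)} := Some \<alpha>))"
proof (cases "last P = F!(j-1)")
  case True
  have "P \<noteq> []" using pa(3) by auto
  then show ?thesis using flip_whole[OF _ pa(2,1,3,4) fe True fl] True by simp
next
  case False
  have notin: "F!(j-1) \<notin> set P"
    using alternating_free_mem_last[OF pa(1) _ _ prev_free] prev_not_start pa(2) False by auto
  have xedge: "\<forall>w. \<phi> {x,w} = Some \<alpha> \<longrightarrow> {x,w} \<in> path_edges P"
    using proper_coloringD[OF pr _ xj] path_edgesI[of 0 P] pa by auto
  have "stage1_inv E (U - {e}) ((shift_fan (flip_path \<phi> \<alpha> \<beta> P) x (take j F))({x, F!(j-1)} := Some \<alpha>))"
    by (rule flip_prefix[OF pr _ Un _ pa(2,1) _ notin xedge]) (use pa fe in auto)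
  then show ?thesis using False by simp
qed

lemma truncated_step:
  assumes pa: "alternating \<phi> \<alpha> \<beta> P" "distinct P" "P!0 = x" "P!1 = F!j"
    and l': "1 \<le> l'" "l' < length P"
  shows "stage1_inv E (U - {e})
    (let \<phi>1 = \<phi>({P!(l'-1), P!l'} := None); P' = take l' P; \<phi>2 = flip_path \<phi>1 \<alpha> \<beta> P' in
     if last P' = F!(j-1) then (shift_fan \<phi>2 x F)({x, last F} := Some \<alpha>)
     else (shift_fan \<phi>2 x (take j F))({x, F!(j-1)} := Some \<alpha>))"
proof -
  define f0 where "f0 = {P!(l'-1), P!l'}"
  define \<phi>1 where "\<phi>1 = \<phi>(f0 := None)"
  define P' where "P' = take l' P"
  note T = alternating_take_uncolor[OF pr pa(1,2) l', folded f0_def \<phi>1_def P'_def]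
  have P': "P' \<noteq> []" "P'!0 = x" "length P' = l'" using l' pa(3) by (auto simp: P'_def)
  have sub: "\<forall>f c. \<phi>1 f = Some c \<longrightarrow> \<phi> f = Some c" by (simp add: \<phi>1_def)
  have notin: "F!(j-1) \<notin> set P'"
  proof
    assume "F!(j-1) \<in> set P'"
    then obtain t where t: "t < l'" "P!t = F!(j-1)" using l' by (auto simp: P'_def in_set_conv_nth)
    moreover have "F!(j-1) \<in> set P" using t l' by (metis nth_mem order.strict_trans)
    ultimately have "P!t = last P"
      using alternating_free_mem_last[OF pa(1) _ _ prev_free] prev_not_start pa(3) by simp
    moreover have "P \<noteq> []" using l' by auto
    ultimately show False using t(1) l' pa(2) by (simp add: last_conv_nth nth_eq_iff_index_eq)
  qed
  have xedge: "\<forall>w. \<phi>1 {x,w} = Some \<alpha> \<longrightarrow> {x,w} \<in> path_edges P'"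
  proof (intro allI impI)
    fix w assume w1: "\<phi>1 {x,w} = Some \<alpha>"
    then have "w = P!1" using proper_coloringD[OF pr _ xj] pa(4) sub by auto
    then have xw: "{x,w} = {P!0, P!Suc 0}" using pa(3) by simp
    show "{x,w} \<in> path_edges P'"
    proof (cases "l' = 1")
      case True then show ?thesis using w1 xw by (simp add: \<phi>1_def f0_def)
    next
      case False then show ?thesis using path_edgesI[of 0 P'] xw l' by (simp add: P'_def)
    qed
  qed
  have f0: "\<phi> f0 = Some (alt_color \<alpha> \<beta> (l'-1))"
    using pa(1) l' unfolding alternating_def f0_def by (metis Suc_diff_1 less_le_trans zero_less_one)
  have kept: "\<forall>i. 0 < i \<and> i < j \<longrightarrow> \<phi>1 {x, F!i} = \<phi> {x, F!i}"
  proof (intro allI impI)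
    fix i assume i: "0 < i \<and> i < j"
    obtain c where "\<phi> {x, F!i} = Some c" "c \<noteq> \<alpha>" "c \<noteq> \<beta>"
      by (rule fan_color_other[of i]) (use i jl in auto)
    then have "{x, F!i} \<noteq> f0" using f0 alt_color_cases by (metis option.inject)
    then show "\<phi>1 {x, F!i} = \<phi> {x, F!i}" by (simp add: \<phi>1_def)
  qed
  have "stage1_inv E (U - {e}) ((shift_fan (flip_path \<phi>1 \<alpha> \<beta> P') x (take j F))({x, F!(j-1)} := Some \<alpha>))"
    by (rule flip_prefix[OF proper_coloring_uncolor[OF pr, of f0, folded \<phi>1_def] sub _ P'(1,2) T(1) _ notin xedge kept])
       (use Un in \<open>simp add: \<phi>1_def\<close>, use T(2) P'(3) in simp)
  moreover have "last P' \<noteq> F!(j-1)" using notin last_in_set[OF P'(1)] by auto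
  ultimately show ?thesis unfolding Let_def \<phi>1_def f0_def P'_def by simp
qed

end

lemma stage1_update_untruncated:
  assumes "(\<phi>', fl) \<in> set_pmf (stage1_update E \<phi> q l x C F P \<alpha>)"
    and "length P - 1 \<noteq> 0" "length P - 1 \<noteq> l"
  shows "let \<beta> = Min (missing E \<phi> q x \<inter> C); j = (LEAST j. F ! j = P ! 1); \<phi>2 = flip_path \<phi> \<alpha> \<beta> P in
    \<phi>' = (if last P = F ! (j - 1) then (shift_fan \<phi>2 x F)({x, last F} := Some \<alpha>)
          else (shift_fan \<phi>2 x (take j F))({x, F ! (j - 1)} := Some \<alpha>))"
  using assms by (simp add: stage1_update_def Let_def split: if_splits)

lemma stage1_update_truncated:
  assumes "(\<phi>', fl) \<in> set_pmf (stage1_update E \<phi> q l x C F P \<alpha>)"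
    and "length P - 1 \<noteq> 0" "length P - 1 = l"
  shows "\<exists>l'\<in>{1..l}. let \<beta> = Min (missing E \<phi> q x \<inter> C); j = (LEAST j. F ! j = P ! 1);
    \<phi>1 = \<phi>({P ! (l' - 1), P ! l'} := None); P' = take l' P; \<phi>2 = flip_path \<phi>1 \<alpha> \<beta> P' in
    \<phi>' = (if last P' = F ! (j - 1) then (shift_fan \<phi>2 x F)({x, last F} := Some \<alpha>)
          else (shift_fan \<phi>2 x (take j F))({x, F ! (j - 1)} := Some \<alpha>))"
  using assms by (auto simp: stage1_update_def Let_def split: if_splits)

lemma stage1_update_fan:
  assumes "(\<phi>', fl) \<in> set_pmf (stage1_update E \<phi> q l x C F P \<alpha>)"
    and "length P - 1 = 0"
  shows "\<phi>' = (shift_fan \<phi> x F)({x, last F} := Some \<alpha>)"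
  using assms by (simp add: stage1_update_def Let_def)

lemma vizing_chain_cases:
  assumes "vizing_chain E \<phi> q e x C l = Some ((F,P),\<alpha>)"
  obtains j where "make_fan E \<phi> q e x C = Some (F, \<alpha>, j)" "j = length F" "P = [x]"
  | j where "make_fan E \<phi> q e x C = Some (F, \<alpha>, j)" "j \<noteq> length F"
      "missing E \<phi> q x \<inter> C \<noteq> {}" "P = ab_path E \<phi> x \<alpha> (Min (missing E \<phi> q x \<inter> C)) l"
proof -
  obtain F0 \<alpha>0 j0 where mf: "make_fan E \<phi> q e x C = Some (F0, \<alpha>0, j0)"
    using assms by (cases "make_fan E \<phi> q e x C") (auto simp: vizing_chain_def)
  show ?thesis
    using assms that by (auto simp: vizing_chain_def mf split: if_splits)
qed

lemma Min_missing_free: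
  assumes "missing E \<phi> q x \<inter> C \<noteq> {}" and sp: "coloring_on E \<phi>"
  shows "Min (missing E \<phi> q x \<inter> C) \<in> C" "free_at \<phi> x (Min (missing E \<phi> q x \<inter> C))"
proof -
  have "finite (missing E \<phi> q x \<inter> C)" by (simp add: missing_def)
  then have "Min (missing E \<phi> q x \<inter> C) \<in> missing E \<phi> q x \<inter> C" using Min_in assms(1) by blast
  then show "Min (missing E \<phi> q x \<inter> C) \<in> C" "free_at \<phi> x (Min (missing E \<phi> q x \<inter> C))"
    using missing_free_at[OF sp] by auto
qed

lemma vizing_chainE:
  assumes sg: "\<forall>f\<in>E. card f = 2" and sp: "coloring_on E \<phi>" and eE: "e \<in> E" and xe: "x \<in> e"
    and blank: "\<phi> e = None" and vc: "vizing_chain E \<phi> q e x C l = Some ((F,P),\<alpha>)"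
  obtains (fan) "is_fan E \<phi> q x F" "e = {x, F!0}" "free_at \<phi> (last F) \<alpha>" "free_at \<phi> x \<alpha>" "P = [x]"
  | (path) j where "is_fan E \<phi> q x F" "e = {x, F!0}" "free_at \<phi> (last F) \<alpha>"
      "0 < j" "j < length F" "\<phi> {x, F!j} = Some \<alpha>" "\<alpha> \<in> C"
      "missing E \<phi> q x \<inter> C \<noteq> {}" "P = ab_path E \<phi> x \<alpha> (Min (missing E \<phi> q x \<inter> C)) l"
  using vc
proof (cases rule: vizing_chain_cases)
  case (1 j)
  note MF = make_fan_props[OF 1(1) sg eE xe]
  have "free_at \<phi> x \<alpha>"
    using MF 1(2) sp by (auto simp: free_at_def coloring_on_def)
  then show thesis using fan MF 1(3) missing_free_at[OF sp] by auto
next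
  case (2 j)
  note MF = make_fan_props[OF 2(1) sg eE xe]
  have "0 < j" using MF 2(2) blank by (cases j) auto
  then show thesis using path MF 2 missing_free_at[OF sp] by auto
qed

lemma vizing_path_facts:
  assumes sg: "\<forall>f\<in>E. card f = 2" and pr: "proper_coloring \<phi>" and sp: "coloring_on E \<phi>"
    and fI: "is_fan E \<phi> q x F" and jl: "j < length F" and xj: "\<phi> {x, F!j} = Some \<alpha>"
    and fx: "free_at \<phi> x \<beta>" and l: "1 \<le> l" and P: "P = ab_path E \<phi> x \<alpha> \<beta> l"
  shows "\<alpha> \<noteq> \<beta>" "alternating \<phi> \<alpha> \<beta> P" "distinct P" "P!0 = x" "1 < length P" "length P \<le> Suc l"
    "P!1 = F!j" "(LEAST i. F!i = P!1) = j"
    "length P < Suc l \<Longrightarrow> free_at \<phi> (last P) (alt_color \<alpha> \<beta> (length P - 1))"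
proof -
  have Pne: "P \<noteq> []" and P0: "P!0 = x" and Palt: "alternating \<phi> \<alpha> \<beta> P"
    and "distinct P" "length P \<le> Suc l"
    using ab_path_props[OF P] by auto
  then show "alternating \<phi> \<alpha> \<beta> P" "distinct P" "P!0 = x" "length P \<le> Suc l" by auto
  show ab: "\<alpha> \<noteq> \<beta>" using xj free_atD[OF fx] by blast
  show fe: "length P < Suc l \<Longrightarrow> free_at \<phi> (last P) (alt_color \<alpha> \<beta> (length P - 1))"
    by (rule ab_path_end_free[OF sg pr sp ab fx P])
  show P2: "1 < length P"
  proof (rule ccontr)
    assume "\<not> 1 < length P"
    moreover have "0 < length P" using Pne by simp
    ultimately have len1: "length P = 1" by linarith
    then have "last P = x" using Pne P0 by (simp add: last_conv_nth)
    moreover have "length P < Suc l" using len1 l by simp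
    ultimately have "free_at \<phi> x (alt_color \<alpha> \<beta> 0)" using fe len1 by simp
    then show False using free_atD[of \<phi> x \<alpha> "F!j"] xj by (simp add: alt_color_def)
  qed
  have "\<phi> {P!0, P!Suc 0} = Some (alt_color \<alpha> \<beta> 0)"
    using Palt P2 by (simp add: alternating_def)
  then have "\<phi> {x, P!1} = Some \<alpha>" using P0 by (simp add: alt_color_def)
  then show P1: "P!1 = F!j" using proper_coloringD[OF pr _ xj] by blast
  have "distinct F" using fI by (simp add: is_fan_def)
  then show "(LEAST i. F!i = P!1) = j"
    unfolding P1
  proof (intro Least_equality)
    fix y assume "F!y = F!j"
    with \<open>distinct F\<close> jl show "j \<le> y" by (cases "y < length F") (auto simp: nth_eq_iff_index_eq)
  qed simp
qed

lemma stage1_inv_step: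
  assumes sg: "\<forall>f\<in>E. card f = 2" and iv: "stage1_inv E U \<phi>" and eU: "e \<in> U" and xe: "x \<in> e"
    and l: "1 \<le> l" and vc: "vizing_chain E \<phi> q e x C l = Some ((F,P),\<alpha>)"
    and up: "(\<phi>', fl) \<in> set_pmf (stage1_update E \<phi> q l x C F P \<alpha>)"
  shows "stage1_inv E (U - {e}) \<phi>'"
proof -
  have pr: "proper_coloring \<phi>" and sp: "coloring_on E \<phi>" and UE: "U \<subseteq> E" and Un: "\<forall>f\<in>U. \<phi> f = None"
    using iv by (auto simp: stage1_inv_def)
  have eE: "e \<in> E" and blank: "\<phi> e = None" using eU UE Un by auto
  show ?thesis
    using sg sp eE xe blank vc
  proof (cases rule: vizing_chainE)
    case fan
    have "\<phi>' = (shift_fan \<phi> x F)({x, last F} := Some \<alpha>)" using stage1_update_fan[OF up] fan by simp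
    moreover have "\<forall>i. 0 < i \<and> i < length F \<longrightarrow> (\<exists>c. \<phi> {x, F!i} = Some c \<and> free_at \<phi> (F!(i-1)) c)"
      using is_fanE[OF fan(1) sp] by metis
    ultimately show ?thesis
      using fan pr sp UE Un
      by (auto simp: is_fan_def intro!: stage1_inv_shift_fan)
  next
    case (path j)
    define \<beta> where "\<beta> = Min (missing E \<phi> q x \<inter> C)"
    have fx: "free_at \<phi> x \<beta>" using Min_missing_free[OF path(8) sp] by (simp add: \<beta>_def)
    note PF = vizing_path_facts[OF sg pr sp path(1,5,6) fx l path(9)[folded \<beta>_def]]
    interpret vizing_step E \<phi> q x F j \<alpha> \<beta> U e
      using path PF(1) pr sp fx UE Un by unfold_locales auto
    show ?thesis
    proof (cases "length P - 1 = l")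
      case True
      then obtain l' where "l' \<in> {1..l}" and "\<phi>' = (let \<phi>1 = \<phi>({P!(l'-1), P!l'} := None); P' = take l' P;
          \<phi>2 = flip_path \<phi>1 \<alpha> \<beta> P' in
          if last P' = F!(j-1) then (shift_fan \<phi>2 x F)({x, last F} := Some \<alpha>)
          else (shift_fan \<phi>2 x (take j F))({x, F!(j-1)} := Some \<alpha>))"
        using stage1_update_truncated[OF up] PF(5,8) l by (auto simp: \<beta>_def Let_def)
      then show ?thesis using truncated_step[OF PF(2,3,4,7)] True by auto
    next
      case False
      then have "\<phi>' = (if last P = F!(j-1) then (shift_fan (flip_path \<phi> \<alpha> \<beta> P) x F)({x, last F} := Some \<alpha>)
          else (shift_fan (flip_path \<phi> \<alpha> \<beta> P) x (take j F))({x, F!(j-1)} := Some \<alpha>))"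
        using stage1_update_untruncated[OF up] PF(5,8) by (simp add: \<beta>_def Let_def)
      moreover have "length P < Suc l" using False PF(6) by linarith
      ultimately show ?thesis using untruncated_step[OF PF(2,4,5,7) PF(9) path(3)] by simp
    qed
  qed
qed

section \<open>Counting the positions at which a vertex can be flagged\<close>

definition flag_positions :: "'a set set \<Rightarrow> 'a coloring \<Rightarrow> nat \<Rightarrow> nat set \<Rightarrow> nat \<Rightarrow> 'a \<Rightarrow> 'a set \<Rightarrow> 'a \<Rightarrow> nat set" where
  "flag_positions E \<phi> q C l v e x = {l' \<in> {1..l}. \<exists>F P \<alpha>. vizing_chain E \<phi> q e x C l = Some ((F,P),\<alpha>) \<and>
      length P - 1 = l \<and> (v = P!(l'-1) \<or> v = P!l')}"

lemma card_le_card_image_mult: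
  assumes "finite S" "\<And>y. y \<in> g ` S \<Longrightarrow> card {s\<in>S. g s = y} \<le> k"
  shows "card S \<le> card (g ` S) * k"
proof -
  have "S = (\<Union>y\<in>g ` S. {s\<in>S. g s = y})" by auto
  then have "card S = card (\<Union>y\<in>g ` S. {s\<in>S. g s = y})" by simp
  also have "\<dots> \<le> (\<Sum>y\<in>g ` S. card {s\<in>S. g s = y})" by (rule card_UN_le) (use assms in simp)
  also have "\<dots> \<le> (\<Sum>y\<in>g ` S. k)" by (rule sum_mono) (use assms in simp)
  also have "\<dots> = card (g ` S) * k" by simp
  finally show ?thesis .
qed

lemma min_max_eq_imp_doubleton_eq: "min (a::nat) b = min c d \<Longrightarrow> max a b = max c d \<Longrightarrow> {a,b} = {c,d}"
  by (auto simp: min_def max_def split: if_splits)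

lemma card_increasing_pairs:
  fixes C :: "nat set"
  assumes "finite C"
  shows "2 * card {(a,b). a \<in> C \<and> b \<in> C \<and> a < b} \<le> card C * card C"
proof -
  define A where "A = {(a,b). a \<in> C \<and> b \<in> C \<and> a < b}"
  define B where "B = {(a,b). a \<in> C \<and> b \<in> C \<and> b < a}"
  have AC: "A \<subseteq> C \<times> C" and BC: "B \<subseteq> C \<times> C" by (auto simp: A_def B_def)
  have fA: "finite A" and fB: "finite B" using AC BC assms finite_subset by blast+
  have "B = prod.swap ` A" by (auto simp: A_def B_def image_iff)
  then have cB: "card B = card A" by (simp add: card_image)
  have "A \<inter> B = {}" by (auto simp: A_def B_def)
  then have "card (A \<union> B) = card A + card B" using fA fB by (simp add: card_Un_disjoint)
  moreover have "card (A \<union> B) \<le> card (C \<times> C)" using AC BC assms by (intro card_mono) auto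
  ultimately show ?thesis using cB by (simp add: A_def card_cartesian_product)
qed

lemma card_color_neighbours:
  assumes pr: "proper_coloring \<phi>" and fin: "finite V" and sp: "coloring_on E \<phi>" and EV: "\<forall>e\<in>E. e \<subseteq> V"
  shows "card {z. \<phi> {v,z} = Some a} \<le> 1" and "finite {z. \<phi> {v,z} = Some a}"
proof -
  have sub: "{z. \<phi> {v,z} = Some a} \<subseteq> V"
  proof
    fix z assume "z \<in> {z. \<phi> {v,z} = Some a}"
    then have "{v,z} \<in> E" using sp by (auto simp: coloring_on_def)
    then show "z \<in> V" using EV by auto
  qed
  show f: "finite {z. \<phi> {v,z} = Some a}" using finite_subset[OF sub fin] .
  have "\<forall>y\<in>{z. \<phi> {v,z} = Some a}. \<forall>w\<in>{z. \<phi> {v,z} = Some a}. y = w"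
    using proper_coloringD[OF pr] by blast
  then show "card {z. \<phi> {v,z} = Some a} \<le> 1" using card_le_Suc0_iff_eq[OF f] by simp
qed

lemma card_colored_incident_pairs:
  assumes pr: "proper_coloring \<phi>" and fin: "finite V" and sp: "coloring_on E \<phi>" and EV: "\<forall>e\<in>E. e \<subseteq> V"
  shows "card {(u,w). (u = v \<or> w = v) \<and> (\<phi> {u,w} = Some a \<or> \<phi> {u,w} = Some b)} \<le> 4"
    and "finite {(u,w). (u = v \<or> w = v) \<and> (\<phi> {u,w} = Some a \<or> \<phi> {u,w} = Some b)}"
proof -
  define N where "N = {z. \<phi> {v,z} = Some a} \<union> {z. \<phi> {v,z} = Some b}"
  note ca = card_color_neighbours[OF pr fin sp EV, of v a] and cb = card_color_neighbours[OF pr fin sp EV, of v b]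
  have fN: "finite N" using ca cb by (simp add: N_def)
  have cN: "card N \<le> 2"
  proof -
    have "card N \<le> card {z. \<phi> {v,z} = Some a} + card {z. \<phi> {v,z} = Some b}"
      unfolding N_def by (rule card_Un_le)
    then show ?thesis using ca cb by simp
  qed
  have sub: "{(u,w). (u = v \<or> w = v) \<and> (\<phi> {u,w} = Some a \<or> \<phi> {u,w} = Some b)}
      \<subseteq> (\<lambda>z. (v,z)) ` N \<union> (\<lambda>z. (z,v)) ` N"
    by (auto simp: N_def insert_commute)
  have f2: "finite ((\<lambda>z. (v,z)) ` N \<union> (\<lambda>z. (z,v)) ` N)" using fN by simp
  have "card ((\<lambda>z. (v,z)) ` N \<union> (\<lambda>z. (z,v)) ` N) \<le> card ((\<lambda>z. (v,z)) ` N) + card ((\<lambda>z. (z,v)) ` N)"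
    by (rule card_Un_le)
  also have "\<dots> \<le> card N + card N" by (intro add_mono card_image_le fN)
  finally have "card ((\<lambda>z. (v,z)) ` N \<union> (\<lambda>z. (z,v)) ` N) \<le> 4" using cN by simp
  then show "card {(u,w). (u = v \<or> w = v) \<and> (\<phi> {u,w} = Some a \<or> \<phi> {u,w} = Some b)} \<le> 4"
    using card_mono[OF f2 sub] by simp
  show "finite {(u,w). (u = v \<or> w = v) \<and> (\<phi> {u,w} = Some a \<or> \<phi> {u,w} = Some b)}"
    using finite_subset[OF sub f2] .
qed

lemma card_colored_witnesses:
  assumes pr: "proper_coloring \<phi>" and fin: "finite V" and sp: "coloring_on E \<phi>" and EV: "\<forall>e\<in>E. e \<subseteq> V"
    and fC: "finite C"
  shows "card {(a,b,u,w). a \<in> C \<and> b \<in> C \<and> a < b \<and> (u = v \<or> w = v) \<and> (\<phi> {u,w} = Some a \<or> \<phi> {u,w} = Some b)}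
         \<le> 2 * card C * card C"
    and "finite {(a,b,u,w). a \<in> C \<and> b \<in> C \<and> a < b \<and> (u = v \<or> w = v) \<and> (\<phi> {u,w} = Some a \<or> \<phi> {u,w} = Some b)}"
proof -
  define Pairs where "Pairs = {(a,b). a \<in> C \<and> b \<in> C \<and> a < (b::nat)}"
  define W where "W = (\<lambda>a b. {(u,w). (u = v \<or> w = v) \<and> (\<phi> {u,w} = Some a \<or> \<phi> {u,w} = Some b)})"
  have "Pairs \<subseteq> C \<times> C" by (auto simp: Pairs_def)
  then have fP: "finite Pairs" using fC finite_subset by blast
  have eq: "{(a,b,u,w). a \<in> C \<and> b \<in> C \<and> a < b \<and> (u = v \<or> w = v) \<and> (\<phi> {u,w} = Some a \<or> \<phi> {u,w} = Some b)}
     = (\<Union>p\<in>Pairs. (\<lambda>(u,w). (fst p, snd p, u, w)) ` W (fst p) (snd p))"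
    by (auto simp: Pairs_def W_def image_iff)
  have fW: "\<And>a b. finite (W a b)" unfolding W_def by (rule card_colored_incident_pairs(2)[OF pr fin sp EV])
  have cW: "\<And>a b. card (W a b) \<le> 4" unfolding W_def by (rule card_colored_incident_pairs(1)[OF pr fin sp EV])
  have "card (\<Union>p\<in>Pairs. (\<lambda>(u,w). (fst p, snd p, u, w)) ` W (fst p) (snd p))
      \<le> (\<Sum>p\<in>Pairs. card ((\<lambda>(u,w). (fst p, snd p, u, w)) ` W (fst p) (snd p)))"
    by (rule card_UN_le[OF fP])
  also have "\<dots> \<le> (\<Sum>p\<in>Pairs. 4)"
  proof (rule sum_mono)
    fix p show "card ((\<lambda>(u,w). (fst p, snd p, u, w)) ` W (fst p) (snd p)) \<le> 4"
      using card_image_le[OF fW, of "\<lambda>(u,w). (fst p, snd p, u, w)" "fst p" "snd p"] cW[of "fst p" "snd p"]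
      by linarith
  qed
  also have "\<dots> = 4 * card Pairs" by simp
  also have "\<dots> \<le> 2 * card C * card C" using card_increasing_pairs[OF fC] by (simp add: Pairs_def)
  finally show "card {(a,b,u,w). a \<in> C \<and> b \<in> C \<and> a < b \<and> (u = v \<or> w = v) \<and> (\<phi> {u,w} = Some a \<or> \<phi> {u,w} = Some b)}
         \<le> 2 * card C * card C" unfolding eq .
  show "finite {(a,b,u,w). a \<in> C \<and> b \<in> C \<and> a < b \<and> (u = v \<or> w = v) \<and> (\<phi> {u,w} = Some a \<or> \<phi> {u,w} = Some b)}"
    unfolding eq using fP fW by blast
qed

lemma degree_le_max: "finite V \<Longrightarrow> x \<in> V \<Longrightarrow> degree E x \<le> max_degree V E"
  unfolding max_degree_def by (rule Max_ge) auto

lemma simple_graph_finite_edges: "simple_graph V E \<Longrightarrow> finite E"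
  unfolding simple_graph_def by (meson Pow_iff finite_Pow_iff finite_subset subsetI)

lemma flag_positionE:
  assumes sg: "\<forall>f\<in>E. card f = 2" and iv: "stage1_inv E U \<phi>" and eU: "e \<in> U" and xe: "x \<in> e"
    and l: "1 \<le> l" and l': "l' \<in> flag_positions E \<phi> q C l v e x"
  obtains F P \<alpha> \<beta> where "vizing_chain E \<phi> q e x C l = Some ((F,P),\<alpha>)" "\<beta> = Min (missing E \<phi> q x \<inter> C)"
    "alternating \<phi> \<alpha> \<beta> P" "free_at \<phi> x \<beta>" "\<alpha> \<noteq> \<beta>" "\<alpha> \<in> C" "\<beta> \<in> C" "P!0 = x"
    "length P = Suc l" "1 \<le> l'" "l' \<le> l" "v = P!(l'-1) \<or> v = P!l'"
proof -
  obtain F P \<alpha> where vc: "vizing_chain E \<phi> q e x C l = Some ((F,P),\<alpha>)" and len: "length P - 1 = l"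
    and pos: "1 \<le> l'" "l' \<le> l" "v = P!(l'-1) \<or> v = P!l'"
    using l' by (auto simp: flag_positions_def)
  have pr: "proper_coloring \<phi>" and sp: "coloring_on E \<phi>" and eE: "e \<in> E" and blank: "\<phi> e = None"
    using iv eU by (auto simp: stage1_inv_def)
  show thesis
    using sg sp eE xe blank vc
  proof (cases rule: vizing_chainE)
    case fan
    then show thesis using len l by simp
  next
    case (path j)
    note \<beta> = Min_missing_free[OF path(8) sp]
    note PF = vizing_path_facts[OF sg pr sp path(1,5,6) \<beta>(2) l path(9)]
    show thesis using that[OF vc refl PF(2) \<beta>(2) PF(1) path(7) \<beta>(1) PF(4) _ pos] PF(5) len by simp
  qed
qed

definition flag_signature :: "'a set set \<Rightarrow> 'a coloring \<Rightarrow> nat \<Rightarrow> nat set \<Rightarrow> nat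
    \<Rightarrow> 'a set \<times> 'a \<times> nat \<Rightarrow> nat \<times> nat \<times> 'a \<times> 'a" where
  "flag_signature E \<phi> q C l = (\<lambda>(e, x, l').
     let r = the (vizing_chain E \<phi> q e x C l); P = snd (fst r); \<alpha> = snd r;
         \<beta> = Min (missing E \<phi> q x \<inter> C)
     in (min \<alpha> \<beta>, max \<alpha> \<beta>, P!(l'-1), P!l'))"

lemma flag_signature_eq:
  "vizing_chain E \<phi> q e x C l = Some ((F,P),\<alpha>) \<Longrightarrow> \<beta> = Min (missing E \<phi> q x \<inter> C) \<Longrightarrow>
   flag_signature E \<phi> q C l (e, x, l') = (min \<alpha> \<beta>, max \<alpha> \<beta>, P!(l'-1), P!l')"
  by (simp add: flag_signature_def Let_def)

lemma flag_signature_mem: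
  assumes sg: "\<forall>f\<in>E. card f = 2" and iv: "stage1_inv E U \<phi>" and eU: "e \<in> U" and xe: "x \<in> e"
    and l: "1 \<le> l" and l': "l' \<in> flag_positions E \<phi> q C l v e x"
  shows "flag_signature E \<phi> q C l (e, x, l') \<in>
    {(a,b,u,w). a \<in> C \<and> b \<in> C \<and> a < b \<and> (u = v \<or> w = v) \<and> (\<phi> {u,w} = Some a \<or> \<phi> {u,w} = Some b)}"
proof -
  obtain F P \<alpha> \<beta> where d: "vizing_chain E \<phi> q e x C l = Some ((F,P),\<alpha>)" "\<beta> = Min (missing E \<phi> q x \<inter> C)"
    "alternating \<phi> \<alpha> \<beta> P" "\<alpha> \<noteq> \<beta>" "\<alpha> \<in> C" "\<beta> \<in> C"
    "length P = Suc l" "1 \<le> l'" "l' \<le> l" "v = P!(l'-1) \<or> v = P!l'"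
    by (rule flag_positionE[OF sg iv eU xe l l'])
  have t: "Suc (l'-1) < length P" "Suc (l'-1) = l'" using d(7,8,9) by auto
  have "\<phi> {P!(l'-1), P!l'} = Some (alt_color \<alpha> \<beta> (l'-1))"
    using d(3) t unfolding alternating_def by metis
  then have "\<phi> {P!(l'-1), P!l'} = Some \<alpha> \<or> \<phi> {P!(l'-1), P!l'} = Some \<beta>"
    using d(8) by (simp add: alt_color_def split: if_splits)
  then show ?thesis
    using flag_signature_eq[OF d(1,2)] d(4,5,6,10) by (auto simp: min_def max_def)
qed

lemma flag_signature_determines:
  assumes sg: "\<forall>f\<in>E. card f = 2" and iv: "stage1_inv E U \<phi>" and l: "1 \<le> l"
    and 1: "e1 \<in> U" "x1 \<in> e1" "l1 \<in> flag_positions E \<phi> q C l v e1 x1"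
    and 2: "e2 \<in> U" "x2 \<in> e2" "l2 \<in> flag_positions E \<phi> q C l v e2 x2"
    and eq: "flag_signature E \<phi> q C l (e1, x1, l1) = flag_signature E \<phi> q C l (e2, x2, l2)"
  shows "x1 = x2" "l1 = l2"
proof -
  have pr: "proper_coloring \<phi>" using iv by (simp add: stage1_inv_def)
  obtain F1 P1 \<alpha>1 \<beta>1 where d1: "vizing_chain E \<phi> q e1 x1 C l = Some ((F1,P1),\<alpha>1)"
    "\<beta>1 = Min (missing E \<phi> q x1 \<inter> C)" "alternating \<phi> \<alpha>1 \<beta>1 P1" "free_at \<phi> x1 \<beta>1" "\<alpha>1 \<noteq> \<beta>1"
    "P1!0 = x1" "length P1 = Suc l" "1 \<le> l1" "l1 \<le> l"
    by (rule flag_positionE[OF sg iv 1(1,2) l 1(3)])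
  obtain F2 P2 \<alpha>2 \<beta>2 where d2: "vizing_chain E \<phi> q e2 x2 C l = Some ((F2,P2),\<alpha>2)"
    "\<beta>2 = Min (missing E \<phi> q x2 \<inter> C)" "alternating \<phi> \<alpha>2 \<beta>2 P2" "free_at \<phi> x2 \<beta>2" "\<alpha>2 \<noteq> \<beta>2"
    "P2!0 = x2" "length P2 = Suc l" "1 \<le> l2" "l2 \<le> l"
    by (rule flag_positionE[OF sg iv 2(1,2) l 2(3)])
  have mm: "min \<alpha>1 \<beta>1 = min \<alpha>2 \<beta>2" "max \<alpha>1 \<beta>1 = max \<alpha>2 \<beta>2" "P1!(l1-1) = P2!(l2-1)" "P1!l1 = P2!l2"
    using eq flag_signature_eq[OF d1(1,2)] flag_signature_eq[OF d2(1,2)] by auto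
  have "l1 - 1 = l2 - 1 \<and> P1!0 = P2!0"
    by (rule alternating_start_unique[OF pr d1(3) d2(3) d1(5) min_max_eq_imp_doubleton_eq[OF mm(1,2)]])
       (use d1 d2 mm in auto)
  then show "x1 = x2" "l1 = l2" using d1 d2 by auto
qed

lemma sum_card_flag_positions:
  assumes G: "simple_graph V E" and iv: "stage1_inv E U \<phi>" and fU: "finite U" and fC: "finite C"
    and cC: "card C \<le> \<kappa>" and l: "1 \<le> l"
  shows "(\<Sum>e\<in>U. \<Sum>x\<in>e. card (flag_positions E \<phi> q C l v e x)) \<le> 2 * max_degree V E * \<kappa>^2"
proof -
  have fV: "finite V" and EV: "\<forall>e\<in>E. e \<subseteq> V" and sg: "\<forall>f\<in>E. card f = 2"
    using G by (auto simp: simple_graph_def)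
  have pr: "proper_coloring \<phi>" and sp: "coloring_on E \<phi>" and UE: "U \<subseteq> E"
    using iv by (auto simp: stage1_inv_def)
  have fe: "\<And>e. e \<in> U \<Longrightarrow> finite e" using UE sg by (metis card.infinite subsetD zero_neq_numeral)
  define S where "S = (SIGMA e:U. SIGMA x:e. flag_positions E \<phi> q C l v e x)"
  define g where "g = flag_signature E \<phi> q C l"
  define T where "T = {(a,b,u,w). a \<in> C \<and> b \<in> C \<and> a < b \<and> (u = v \<or> w = v) \<and> (\<phi> {u,w} = Some a \<or> \<phi> {u,w} = Some b)}"
  define \<Delta> where "\<Delta> = max_degree V E"
  have fL: "\<And>e x. finite (flag_positions E \<phi> q C l v e x)" by (simp add: flag_positions_def)
  have fS: "finite S" unfolding S_def using fU fe fL by (intro finite_SigmaI) auto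
  have cS: "card S = (\<Sum>e\<in>U. \<Sum>x\<in>e. card (flag_positions E \<phi> q C l v e x))"
    unfolding S_def using fU fe fL by (simp add: card_SigmaI)
  have gT: "g ` S \<subseteq> T"
  proof
    fix y assume "y \<in> g ` S"
    then obtain e x l' where s: "e \<in> U" "x \<in> e" "l' \<in> flag_positions E \<phi> q C l v e x"
      and y: "y = g (e, x, l')" by (auto simp: S_def)
    show "y \<in> T" unfolding y g_def T_def by (rule flag_signature_mem[OF sg iv s(1,2) l s(3)])
  qed
  have fib: "card {s\<in>S. g s = y} \<le> \<Delta>" if ys: "y \<in> g ` S" for y
  proof -
    obtain s1 where s1: "s1 \<in> S" "y = g s1" using ys by blast
    obtain e0 x0 l0 where "s1 = (e0,x0,l0)" by (cases s1)
    then have s0: "(e0,x0,l0) \<in> S" "y = g (e0,x0,l0)" using s1 by simp_all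
    have s0': "e0 \<in> U" "x0 \<in> e0" "l0 \<in> flag_positions E \<phi> q C l v e0 x0"
      using s0(1) by (auto simp: S_def)
    have "{s\<in>S. g s = y} \<subseteq> (\<lambda>e. (e,x0,l0)) ` {e\<in>E. x0 \<in> e}"
    proof
      fix s assume sy: "s \<in> {s\<in>S. g s = y}"
      obtain e x l' where s1: "s = (e,x,l')" by (cases s)
      then have s: "s = (e,x,l')" "e \<in> U" "x \<in> e"
        "l' \<in> flag_positions E \<phi> q C l v e x" "g (e,x,l') = y"
        using sy by (simp_all add: S_def)
      have "x = x0" "l' = l0"
        using flag_signature_determines[OF sg iv l s(2,3,4) s0'] s(5) s0(2) by (auto simp: g_def)
      then show "s \<in> (\<lambda>e. (e,x0,l0)) ` {e\<in>E. x0 \<in> e}" using s UE by auto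
    qed
    then have "card {s\<in>S. g s = y} \<le> card ((\<lambda>e. (e,x0,l0)) ` {e\<in>E. x0 \<in> e})"
      using simple_graph_finite_edges[OF G] by (intro card_mono) auto
    also have "\<dots> \<le> degree E x0"
      unfolding degree_def using simple_graph_finite_edges[OF G] by (intro card_image_le) auto
    also have "\<dots> \<le> \<Delta>" unfolding \<Delta>_def
      using s0(1) UE EV by (intro degree_le_max[OF fV]) (auto simp: S_def)
    finally show ?thesis .
  qed
  have "card S \<le> card (g ` S) * \<Delta>" by (rule card_le_card_image_mult[OF fS fib])
  also have "\<dots> \<le> card T * \<Delta>"
    using card_colored_witnesses(2)[OF pr fV sp EV fC, of v] gT by (simp add: T_def card_mono)
  also have "\<dots> \<le> 2 * card C * card C * \<Delta>"
    using card_colored_witnesses(1)[OF pr fV sp EV fC, of v] by (simp add: T_def)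
  also have "\<dots> \<le> 2 * \<kappa> * \<kappa> * \<Delta>" using cC by (intro mult_mono) auto
  finally show ?thesis using cS by (simp add: \<Delta>_def power2_eq_square algebra_simps)
qed

section \<open>The probability of flagging a vertex\<close>

lemma stage1_update_no_flag:
  assumes "length P - 1 \<noteq> l" "r \<in> set_pmf (stage1_update E \<phi> q l x C F P \<alpha>)"
  shows "snd r = None"
  using assms by (auto simp: stage1_update_def Let_def split: if_splits)

lemma prob_stage1_update_flag:
  assumes "length P - 1 = l" "l \<noteq> 0"
  shows "measure_pmf.prob (stage1_update E \<phi> q l x C F P \<alpha>) {r. \<exists>f. snd r = Some f \<and> v \<in> f}
     = card {l'\<in>{1..l}. v = P!(l'-1) \<or> v = P!l'} / l"
proof -
  define H where "H = (\<lambda>l'. (\<phi>({P ! (l' - 1), P ! l'} := None), take l' P, Some {P ! (l' - 1), P ! l'}))"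
  have "\<exists>G. stage1_update E \<phi> q l x C F P \<alpha> = map_pmf G (map_pmf H (pmf_of_set {1..l})) \<and>
      (\<forall>t. snd (G t) = snd (snd t))"
    using assms unfolding stage1_update_def H_def Let_def
    by simp (intro exI conjI refl allI, auto split: prod.splits)
  then obtain G where eq: "stage1_update E \<phi> q l x C F P \<alpha> = map_pmf G (map_pmf H (pmf_of_set {1..l}))"
    and sG: "\<And>t. snd (G t) = snd (snd t)" by blast
  have "(H -` (G -` {r. \<exists>f. snd r = Some f \<and> v \<in> f})) = {l'. v = P!(l'-1) \<or> v = P!l'}"
    using sG by (auto simp: H_def)
  then have "measure_pmf.prob (stage1_update E \<phi> q l x C F P \<alpha>) {r. \<exists>f. snd r = Some f \<and> v \<in> f}
      = measure_pmf.prob (pmf_of_set {1..l}) {l'. v = P!(l'-1) \<or> v = P!l'}"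
    unfolding eq by simp
  also have "\<dots> = card ({1..l} \<inter> {l'. v = P!(l'-1) \<or> v = P!l'}) / card {1..l}"
    using assms by (subst measure_pmf_of_set) auto
  also have "\<dots> = card {l'\<in>{1..l}. v = P!(l'-1) \<or> v = P!l'} / l"
    by (simp add: Int_def)
  finally show ?thesis .
qed

definition stage1_step :: "nat \<Rightarrow> 'a set set \<Rightarrow> nat \<Rightarrow> nat \<Rightarrow> nat \<Rightarrow> 'a set set \<Rightarrow> 'a coloring
    \<Rightarrow> 'a set \<Rightarrow> 'a \<Rightarrow> nat set \<Rightarrow> 'a iter_record list pmf" where
  "stage1_step n E q \<kappa> l U \<phi> e x C = (case vizing_chain E \<phi> q e x C l of
          None \<Rightarrow> return_pmf [(\<phi>, C, None)]
        | Some ((F, P), \<alpha>) \<Rightarrow>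
            bind_pmf (stage1_update E \<phi> q l x C F P \<alpha>) (\<lambda>(\<phi>', fl).
            map_pmf (Cons (\<phi>, C, fl)) (stage1_loop n E q \<kappa> l (U - {e}) \<phi>')))"

lemma stage1_loop_Suc: "U \<noteq> {} \<Longrightarrow> stage1_loop (Suc n) E q \<kappa> l U \<phi> =
   bind_pmf (pmf_of_set U) (\<lambda>e. bind_pmf (pmf_of_set e) (\<lambda>x.
     bind_pmf (map_pmf set (sample_list \<kappa> {1..q})) (\<lambda>C. stage1_step n E q \<kappa> l U \<phi> e x C)))"
  by (simp add: stage1_step_def)

lemma stage1_step_set_pmf: "t \<in> set_pmf (stage1_step n E q \<kappa> l U \<phi> e x C) \<Longrightarrow> \<exists>fl r. t = (\<phi>, C, fl) # r"
  by (auto simp: stage1_step_def split: option.splits)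

lemma at_Cons_Suc:
  assumes "1 \<le> i"
  shows "phi_at (h # r) (Suc i) = phi_at r i" "C_at (h # r) (Suc i) = C_at r i"
    "flagged_at (h # r) (Suc i) v \<longleftrightarrow> flagged_at r i v"
  using assms by (auto simp: phi_at_def C_at_def flagged_at_def)

lemma prob_stage1_step_flagged:
  assumes "e \<in> U" "x \<in> e" "1 \<le> l"
  shows "measure_pmf.prob (stage1_step n E q \<kappa> l U \<phi> e x C) {t. flagged_at t 1 v} \<le> card (flag_positions E \<phi> q C l v e x) / l"
proof (cases "vizing_chain E \<phi> q e x C l")
  case None
  then have "measure_pmf.prob (stage1_step n E q \<kappa> l U \<phi> e x C) {t. flagged_at t 1 v} = 0"
    by (simp add: stage1_step_def flagged_at_def)
  then show ?thesis by simp
next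
  case (Some r0)
  obtain F P \<alpha> where r0: "r0 = ((F,P),\<alpha>)" by (metis prod.collapse)
  have step_eq: "stage1_step n E q \<kappa> l U \<phi> e x C = bind_pmf (stage1_update E \<phi> q l x C F P \<alpha>) (\<lambda>(\<phi>', fl).
            map_pmf (Cons (\<phi>, C, fl)) (stage1_loop n E q \<kappa> l (U - {e}) \<phi>'))"
    using Some r0 by (simp add: stage1_step_def)
  show ?thesis
  proof (cases "length P - 1 = l")
    case False
    have "measure_pmf.prob (stage1_step n E q \<kappa> l U \<phi> e x C) {t. flagged_at t 1 v} = 0"
      unfolding measure_pmf_zero_iff step_eq
      using stage1_update_no_flag[OF False] by (fastforce simp: flagged_at_def)
    then show ?thesis by simp
  next
    case True
    have "measure_pmf.prob (stage1_step n E q \<kappa> l U \<phi> e x C) {t. flagged_at t 1 v}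
        \<le> measure_pmf.prob (stage1_update E \<phi> q l x C F P \<alpha>) {r. \<exists>f. snd r = Some f \<and> v \<in> f}"
      unfolding step_eq by (rule measure_bind_pmf_le_measure) (auto simp: flagged_at_def split: prod.splits)
    also have "\<dots> = card {l'\<in>{1..l}. v = P!(l'-1) \<or> v = P!l'} / l"
      using prob_stage1_update_flag[OF True] assms(3) by simp
    also have "{l'\<in>{1..l}. v = P!(l'-1) \<or> v = P!l'} = flag_positions E \<phi> q C l v e x"
      using Some r0 True by (auto simp: flag_positions_def)
    finally show ?thesis .
  qed
qed

lemma stage1_loop_Suc_sample_first:
  assumes "U \<noteq> {}"
  shows "stage1_loop (Suc n) E q \<kappa> l U \<phi> =
    bind_pmf (map_pmf set (sample_list \<kappa> {1..q})) (\<lambda>C.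
      bind_pmf (pmf_of_set U) (\<lambda>e. bind_pmf (pmf_of_set e) (\<lambda>x. stage1_step n E q \<kappa> l U \<phi> e x C)))"
proof -
  have "stage1_loop (Suc n) E q \<kappa> l U \<phi> =
      bind_pmf (pmf_of_set U) (\<lambda>e. bind_pmf (map_pmf set (sample_list \<kappa> {1..q})) (\<lambda>C.
        bind_pmf (pmf_of_set e) (\<lambda>x. stage1_step n E q \<kappa> l U \<phi> e x C)))"
    unfolding stage1_loop_Suc[OF assms] by (subst bind_commute_pmf) (rule refl)
  then show ?thesis by (simp add: bind_commute_pmf[of "pmf_of_set U"])
qed

lemma prob_flagged_fixed_sample:
  assumes G: "simple_graph V E" and iv: "stage1_inv E U \<phi>" and fU: "finite U" and Une: "U \<noteq> {}"
    and l: "1 \<le> l" and fC: "finite C" and cC: "card C \<le> \<kappa>"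
  shows "measure_pmf.prob (bind_pmf (pmf_of_set U) (\<lambda>e. bind_pmf (pmf_of_set e) (\<lambda>x.
            stage1_step n E q \<kappa> l U \<phi> e x C))) {t. flagged_at t 1 v}
    \<le> real (max_degree V E) * real \<kappa> ^ 2 / (real l * real (card U))"
proof -
  let ?N = "\<lambda>e x. real (card (flag_positions E \<phi> q C l v e x))"
  have ce: "card e = 2" if "e \<in> U" for e
    using G iv that by (auto simp: simple_graph_def stage1_inv_def)
  then have fe: "finite e \<and> e \<noteq> {}" if "e \<in> U" for e
    using that by (metis card.empty card.infinite zero_neq_numeral)
  have "measure_pmf.prob (bind_pmf (pmf_of_set U) (\<lambda>e. bind_pmf (pmf_of_set e) (\<lambda>x.
            stage1_step n E q \<kappa> l U \<phi> e x C))) {t. flagged_at t 1 v}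
      = (\<Sum>e\<in>U. (\<Sum>x\<in>e. measure_pmf.prob (stage1_step n E q \<kappa> l U \<phi> e x C) {t. flagged_at t 1 v})
          / card e) / card U"
    using fU Une fe by (simp add: measure_bind_pmf_of_set)
  also have "\<dots> \<le> (\<Sum>e\<in>U. (\<Sum>x\<in>e. ?N e x / l) / 2) / card U"
  proof (intro divide_right_mono sum_mono)
    fix e assume e: "e \<in> U"
    have "(\<Sum>x\<in>e. measure_pmf.prob (stage1_step n E q \<kappa> l U \<phi> e x C) {t. flagged_at t 1 v})
        \<le> (\<Sum>x\<in>e. ?N e x / l)"
      using prob_stage1_step_flagged[OF e _ l] by (intro sum_mono) simp
    then show "(\<Sum>x\<in>e. measure_pmf.prob (stage1_step n E q \<kappa> l U \<phi> e x C) {t. flagged_at t 1 v})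
        / card e \<le> (\<Sum>x\<in>e. ?N e x / l) / 2"
      using ce[OF e] by (simp add: divide_right_mono)
  qed simp_all
  also have "\<dots> = real (\<Sum>e\<in>U. \<Sum>x\<in>e. card (flag_positions E \<phi> q C l v e x)) / (2 * l * card U)"
    by (simp add: sum_divide_distrib[symmetric] of_nat_sum)
  also have "\<dots> \<le> real (2 * max_degree V E * \<kappa>^2) / (2 * l * card U)"
  proof (rule divide_right_mono)
    show "real (\<Sum>e\<in>U. \<Sum>x\<in>e. card (flag_positions E \<phi> q C l v e x)) \<le> real (2 * max_degree V E * \<kappa>^2)"
      using sum_card_flag_positions[OF G iv fU fC cC l, of q v] by (simp only: of_nat_le_iff)
  qed simp
  also have "\<dots> = real (max_degree V E) * real \<kappa> ^ 2 / (real l * real (card U))"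
    by simp
  finally show ?thesis .
qed

lemma prob_flagged_first_iteration:
  assumes G: "simple_graph V E" and iv: "stage1_inv E U \<phi>" and fU: "finite U" and Une: "U \<noteq> {}" and l: "1 \<le> l"
  shows "measure_pmf.prob (stage1_loop (Suc n) E q \<kappa> l U \<phi>)
      ({t. phi_at t 1 = a \<and> C_at t 1 = b} \<inter> {t. flagged_at t 1 v})
    \<le> (real (max_degree V E) * real \<kappa> ^ 2 / (real l * real (card U))) *
      measure_pmf.prob (stage1_loop (Suc n) E q \<kappa> l U \<phi>) {t. phi_at t 1 = a \<and> C_at t 1 = b}"
proof -
  define K where "K = real (max_degree V E) * real \<kappa> ^ 2 / (real l * real (card U))"
  define A where "A = {t. phi_at t 1 = a \<and> C_at t 1 = b}"
  define B where "B = {t. flagged_at t 1 v}"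
  have K0: "0 \<le> K" by (simp add: K_def)
  let ?Q = "\<lambda>C. bind_pmf (pmf_of_set U) (\<lambda>e. bind_pmf (pmf_of_set e) (\<lambda>x. stage1_step n E q \<kappa> l U \<phi> e x C))"
  have "card e = 2" if "e \<in> U" for e
    using G iv that by (auto simp: simple_graph_def stage1_inv_def)
  then have fe: "finite e \<and> e \<noteq> {}" if "e \<in> U" for e
    using that by (metis card.empty card.infinite zero_neq_numeral)
  have main: "measure_pmf.prob (?Q C) (A \<inter> B) \<le> K * measure_pmf.prob (?Q C) A"
    if C: "C \<in> set_pmf (map_pmf set (sample_list \<kappa> {1..q}))" for C
  proof -
    define Q where "Q = ?Q C"
    have inA: "t \<in> A \<longleftrightarrow> a = Some \<phi> \<and> b = Some C" if tQ: "t \<in> set_pmf Q" for t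
    proof -
      obtain e x where "e \<in> U" "x \<in> e" "t \<in> set_pmf (stage1_step n E q \<kappa> l U \<phi> e x C)"
        using tQ fU Une fe by (auto simp: Q_def)
      then obtain fl r where "t = (\<phi>, C, fl) # r" using stage1_step_set_pmf by metis
      then show ?thesis by (auto simp: A_def phi_at_def C_at_def)
    qed
    have "measure_pmf.prob Q (A \<inter> B) \<le> K * measure_pmf.prob Q A"
    proof (cases "a = Some \<phi> \<and> b = Some C")
      case False
      then have "set_pmf Q \<inter> (A \<inter> B) = {}" using inA by blast
      then show ?thesis by (simp add: measure_pmf_zero_iff[symmetric] K_def)
    next
      case True
      have "measure_pmf.prob Q A = 1"
        using inA True by (subst measure_pmf.prob_eq_1) (auto simp: AE_measure_pmf_iff)
      moreover have "measure_pmf.prob Q (A \<inter> B) \<le> measure_pmf.prob Q B"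
        by (rule measure_pmf.finite_measure_mono) auto
      moreover have "measure_pmf.prob Q B \<le> K"
        unfolding Q_def B_def K_def using sample_set_card[OF C]
        by (intro prob_flagged_fixed_sample[OF G iv fU Une l]) auto
      ultimately show ?thesis by simp
    qed
    then show ?thesis by (simp add: Q_def)
  qed
  show ?thesis
    unfolding stage1_loop_Suc_sample_first[OF Une] A_def[symmetric] B_def[symmetric] K_def[symmetric]
    by (rule measure_bind_pmf_le_mult[OF main K0])
qed

lemma prob_flagged_later_iteration:
  assumes sg: "\<forall>f\<in>E. card f = 2" and iv: "stage1_inv E U \<phi>" and Une: "U \<noteq> {}" and fU: "finite U"
    and l: "1 \<le> l" and i: "1 \<le> i" and K0: "0 \<le> K"
    and IH: "\<And>e \<phi>'. e \<in> U \<Longrightarrow> stage1_inv E (U - {e}) \<phi>' \<Longrightarrow>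
       measure_pmf.prob (stage1_loop n E q \<kappa> l (U - {e}) \<phi>')
         ({t. phi_at t i = a \<and> C_at t i = b} \<inter> {t. flagged_at t i v})
       \<le> K * measure_pmf.prob (stage1_loop n E q \<kappa> l (U - {e}) \<phi>') {t. phi_at t i = a \<and> C_at t i = b}"
  shows "measure_pmf.prob (stage1_loop (Suc n) E q \<kappa> l U \<phi>)
      ({t. phi_at t (Suc i) = a \<and> C_at t (Suc i) = b} \<inter> {t. flagged_at t (Suc i) v})
    \<le> K * measure_pmf.prob (stage1_loop (Suc n) E q \<kappa> l U \<phi>) {t. phi_at t (Suc i) = a \<and> C_at t (Suc i) = b}"
proof -
  let ?A = "{t. phi_at t (Suc i) = a \<and> C_at t (Suc i) = b}" and ?B = "{t. flagged_at t (Suc i) v}"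
  have step: "measure_pmf.prob (stage1_step n E q \<kappa> l U \<phi> e x C) (?A \<inter> ?B)
      \<le> K * measure_pmf.prob (stage1_step n E q \<kappa> l U \<phi> e x C) ?A"
    if e: "e \<in> U" and x: "x \<in> e" for e x C
  proof (cases "vizing_chain E \<phi> q e x C l")
    case None
    then have "measure_pmf.prob (stage1_step n E q \<kappa> l U \<phi> e x C) (?A \<inter> ?B) = 0"
      using i by (simp add: stage1_step_def flagged_at_def)
    then show ?thesis using K0 by simp
  next
    case (Some r0)
    obtain F P \<alpha> where r0: "r0 = ((F,P),\<alpha>)" by (metis prod.collapse)
    have step_eq: "stage1_step n E q \<kappa> l U \<phi> e x C = bind_pmf (stage1_update E \<phi> q l x C F P \<alpha>)
        (\<lambda>(\<phi>', fl). map_pmf (Cons (\<phi>, C, fl)) (stage1_loop n E q \<kappa> l (U - {e}) \<phi>'))"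
      using Some r0 by (simp add: stage1_step_def)
    show ?thesis unfolding step_eq
    proof (rule measure_bind_pmf_le_mult[OF _ K0], clarify)
      fix \<phi>' fl assume r: "(\<phi>', fl) \<in> set_pmf (stage1_update E \<phi> q l x C F P \<alpha>)"
      have "stage1_inv E (U - {e}) \<phi>'"
        by (rule stage1_inv_step[OF sg iv e x l _ r]) (use Some r0 in simp)
      then show "measure_pmf.prob (map_pmf (Cons (\<phi>, C, fl)) (stage1_loop n E q \<kappa> l (U - {e}) \<phi>')) (?A \<inter> ?B)
          \<le> K * measure_pmf.prob (map_pmf (Cons (\<phi>, C, fl)) (stage1_loop n E q \<kappa> l (U - {e}) \<phi>')) ?A"
        using IH[OF e] by (simp add: at_Cons_Suc[OF i])
    qed
  qed
  have "finite e \<and> e \<noteq> {}" if "e \<in> U" for e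
    using sg iv that by (metis card.empty card.infinite stage1_inv_def subsetD zero_neq_numeral)
  then show ?thesis
    unfolding stage1_loop_Suc[OF Une] using step fU Une
    by (intro measure_bind_pmf_le_mult K0) auto
qed

lemma prob_flagged_stage1_loop:
  assumes G: "simple_graph V E" and l: "1 \<le> l"
  shows "stage1_inv E U \<phi> \<Longrightarrow> finite U \<Longrightarrow> 1 \<le> i \<Longrightarrow> i \<le> card U \<Longrightarrow>
    measure_pmf.prob (stage1_loop n E q \<kappa> l U \<phi>) ({t. phi_at t i = a \<and> C_at t i = b} \<inter> {t. flagged_at t i v})
    \<le> (real (max_degree V E) * real \<kappa> ^ 2 / (real l * real (card U - i + 1))) *
       measure_pmf.prob (stage1_loop n E q \<kappa> l U \<phi>) {t. phi_at t i = a \<and> C_at t i = b}"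
proof (induction n arbitrary: U \<phi> i)
  case 0
  then show ?case by (simp add: flagged_at_def)
next
  case (Suc n)
  have sg: "\<forall>f\<in>E. card f = 2" using G by (simp add: simple_graph_def)
  have Une: "U \<noteq> {}" using Suc.prems by auto
  show ?case
  proof (cases "i = 1")
    case True
    moreover have "card U - i + 1 = card U" using True Suc.prems(4) by simp
    ultimately show ?thesis using prob_flagged_first_iteration[OF G Suc.prems(1,2) Une l] by (simp only:)
  next
    case False
    then obtain i' where i': "i = Suc i'" "1 \<le> i'" using Suc.prems(3) by (cases i) auto
    show ?thesis unfolding i'(1)
    proof (rule prob_flagged_later_iteration[OF sg Suc.prems(1) Une Suc.prems(2) l i'(2)])
      fix e \<phi>' assume e: "e \<in> U" and iv': "stage1_inv E (U - {e}) \<phi>'"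
      have "card (U - {e}) - i' + 1 = card U - Suc i' + 1" "i' \<le> card (U - {e})"
        using e i' Suc.prems(2,4) by auto
      then show "measure_pmf.prob (stage1_loop n E q \<kappa> l (U - {e}) \<phi>')
          ({t. phi_at t i' = a \<and> C_at t i' = b} \<inter> {t. flagged_at t i' v})
        \<le> real (max_degree V E) * real \<kappa> ^ 2 / (real l * real (card U - Suc i' + 1)) *
          measure_pmf.prob (stage1_loop n E q \<kappa> l (U - {e}) \<phi>') {t. phi_at t i' = a \<and> C_at t i' = b}"
        using Suc.IH[OF iv' _ i'(2)] Suc.prems(2) by simp
    qed simp
  qed
qed

lemma stage1_update_l0: "r \<in> set_pmf (stage1_update E \<phi> q 0 x C F P \<alpha>) \<Longrightarrow> snd r = None"
  by (auto simp: stage1_update_def Let_def split: if_splits)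

lemma stage1_loop_l0: "t \<in> set_pmf (stage1_loop n E q \<kappa> 0 U \<phi>) \<Longrightarrow> \<forall>r\<in>set t. snd (snd r) = None"
proof (induction n arbitrary: U \<phi> t)
  case 0 then show ?case by simp
next
  case (Suc n)
  show ?case
  proof (cases "U = {}")
    case True then show ?thesis using Suc.prems by simp
  next
    case False
    from Suc.prems obtain e x C where ex: "t \<in> set_pmf (stage1_step n E q \<kappa> 0 U \<phi> e x C)"
      unfolding stage1_loop_Suc[OF False] by auto
    show ?thesis
    proof (cases "vizing_chain E \<phi> q e x C 0")
      case None then show ?thesis using ex by (simp add: stage1_step_def)
    next
      case (Some r0)
      obtain F P \<alpha> where r0: "r0 = ((F,P),\<alpha>)" by (metis prod.collapse)
      from ex Some r0 obtain \<phi>' fl t' where r: "(\<phi>', fl) \<in> set_pmf (stage1_update E \<phi> q 0 x C F P \<alpha>)"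
        "t' \<in> set_pmf (stage1_loop n E q \<kappa> 0 (U - {e}) \<phi>')" "t = (\<phi>, C, fl) # t'"
        by (auto simp: stage1_step_def)
      have "fl = None" using stage1_update_l0[OF r(1)] by simp
      then show ?thesis using Suc.IH[OF r(2)] r(3) by simp
    qed
  qed
qed

lemma prob_flagged_l0: "measure_pmf.prob (stage1_loop n E q \<kappa> 0 U \<phi>) {t. flagged_at t i v} = 0"
  unfolding measure_pmf_zero_iff
proof (rule equals0I)
  fix t assume t: "t \<in> set_pmf (stage1_loop n E q \<kappa> 0 U \<phi>) \<inter> {t. flagged_at t i v}"
  then obtain f where f: "1 \<le> i" "i \<le> length t" "snd (snd (t ! (i - 1))) = Some f"
    by (auto simp: flagged_at_def)
  have "t ! (i - 1) \<in> set t" using f by simp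
  then show False using stage1_loop_l0 t f by fastforce
qed

lemma prob_flagged_stage1:
  assumes G: "simple_graph V E" and i: "1 \<le> i" "i \<le> card E"
  shows "measure_pmf.prob (stage1 E q \<kappa> l) ({t. phi_at t i = a \<and> C_at t i = b} \<inter> {t. flagged_at t i v})
    \<le> real (max_degree V E) * real \<kappa> ^ 2 / (real l * real (card E - i + 1)) *
       measure_pmf.prob (stage1 E q \<kappa> l) {t. phi_at t i = a \<and> C_at t i = b}"
proof (cases "l = 0")
  case True
  \<comment> \<open>the bound is then \<open>0\<close> by division by zero, and indeed no edge is ever flagged\<close>
  have "measure_pmf.prob (stage1 E q \<kappa> l) ({t. phi_at t i = a \<and> C_at t i = b} \<inter> {t. flagged_at t i v})
      \<le> measure_pmf.prob (stage1 E q \<kappa> l) {t. flagged_at t i v}"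
    by (rule measure_pmf.finite_measure_mono) auto
  then show ?thesis using True by (simp add: stage1_def prob_flagged_l0)
next
  case False
  have "stage1_inv E E (\<lambda>_. None)" by (simp add: stage1_inv_def proper_coloring_def coloring_on_def)
  then show ?thesis unfolding stage1_def
    using prob_flagged_stage1_loop[OF G _ _ simple_graph_finite_edges[OF G] i] False by simp
qed

lemma cond_prob_flagged_stage1:
  assumes G: "simple_graph V E" and i: "1 \<le> i" "i \<le> card E"
    and pos: "measure_pmf.prob (stage1 E q \<kappa> l) {t. phi_at t i = a \<and> C_at t i = b} > 0"
  shows "measure_pmf.prob (cond_pmf (stage1 E q \<kappa> l) {t. phi_at t i = a \<and> C_at t i = b})
             {t. flagged_at t i v}
           \<le> real (max_degree V E) * real \<kappa> ^ 2 / (real l * real (card E - i + 1))"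
    (is "measure_pmf.prob (cond_pmf ?p ?A) ?B \<le> ?K")
proof -
  have "set_pmf ?p \<inter> ?A \<noteq> {}"
    using pos by (auto simp flip: measure_pmf_zero_iff)
  then have "measure_pmf.prob (cond_pmf ?p ?A) ?B = measure_pmf.prob ?p (?A \<inter> ?B) / measure_pmf.prob ?p ?A"
    by (rule measure_cond_pmf)
  also have "\<dots> \<le> ?K * measure_pmf.prob ?p ?A / measure_pmf.prob ?p ?A"
    by (intro divide_right_mono prob_flagged_stage1[OF G i]) simp
  also have "\<dots> = ?K"
    using pos by simp
  finally show ?thesis .
qed

lemma simple_graph_card_ge_2:
  assumes "simple_graph V E" "E \<noteq> {}"
  shows "2 \<le> card V"
proof -
  obtain e where "e \<in> E" using assms(2) by blast
  then have "card e = 2" "e \<subseteq> V" "finite V" using assms(1) by (auto simp: simple_graph_def)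
  then show ?thesis by (metis card_mono)
qed

lemma bound_for_large_l:
  fixes \<Delta> k l m L \<epsilon> :: real
  assumes "0 < \<epsilon>" "0 < L" "0 < m" "0 \<le> \<Delta>" "50 * k\<^sup>2 * L / \<epsilon> \<le> l"
  shows "\<Delta> * k\<^sup>2 / (l * m) \<le> \<epsilon> * \<Delta> / (50 * m * L)"
proof (cases "k = 0")
  case False
  have "0 < 50 * k\<^sup>2 * L / \<epsilon>" using False assms by simp
  then have "\<Delta> * k\<^sup>2 / (l * m) \<le> \<Delta> * k\<^sup>2 / (50 * k\<^sup>2 * L / \<epsilon> * m)"
    using assms by (intro divide_left_mono mult_right_mono mult_pos_pos) auto
  also have "\<dots> = \<epsilon> * \<Delta> / (50 * m * L)"
    using False assms by (simp add: field_simps)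
  finally show ?thesis .
qed (use assms in simp)

theorem lemma3p5:
  fixes V :: "'a set" and E :: "'a set set" and \<epsilon> :: real and q \<kappa> l i :: nat and v :: 'a
    and a :: "'a coloring option" and b :: "nat set option"
  assumes G: "simple_graph V E"
    and eps: "0 < \<epsilon>" "\<epsilon> < 1"
    and q: "real q = (1 + \<epsilon> / 2) * real (max_degree V E)"
    and i: "1 \<le> i" "i \<le> card E"
    and pos: "measure_pmf.prob (stage1 E q \<kappa> l) {t. phi_at t i = a \<and> C_at t i = b} > 0"
  shows "measure_pmf.prob (cond_pmf (stage1 E q \<kappa> l) {t. phi_at t i = a \<and> C_at t i = b})
             {t. flagged_at t i v}
           \<le> real (max_degree V E) * real \<kappa> ^ 2 / (real l * real (card E - i + 1))
       \<and> (real l \<ge> 50 * real \<kappa> ^ 2 * ln (real (card V)) / \<epsilon> \<longrightarrow>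
          measure_pmf.prob (cond_pmf (stage1 E q \<kappa> l) {t. phi_at t i = a \<and> C_at t i = b})
             {t. flagged_at t i v}
           \<le> \<epsilon> * real (max_degree V E) / (50 * real (card E - i + 1) * ln (real (card V))))"
proof -
  note bound = cond_prob_flagged_stage1[OF G i pos, of v]
  have "E \<noteq> {}" using i by auto
  then have "0 < ln (real (card V))" using simple_graph_card_ge_2[OF G] by simp
  moreover have "0 < real (card E - i + 1)" by simp
  ultimately show ?thesis
    using bound bound_for_large_l[OF eps(1)] by (meson of_nat_0_le_iff order_trans)
qed

end
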